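(* Let $m,n \in \mathbb{N}$ with $n \geq m$. With the inverse-transform decoder $\Gamma$, alignment cost $d$, and test statistic $\phi$ with block size $k = m$ defined in the context, let $\xi,\xi'$ be i.i.d. uniform on $\Xi^n$, let $Y = \mathtt{generate}(\xi;m,p,\Gamma)$ and $\widetilde{Y} = Y$. Then almost surely $$\mathbb{P}(\phi(\widetilde{Y},\xi') \leq \phi(\widetilde{Y},\xi) \mid \widetilde{Y}) \leq 2n\exp\!\big(-k C_0^2\, \alpha(\widetilde{Y})^2/2\big).$$
   Context: Vocabulary $[N]$; $\Pi$ the permutations of $[N]$; $\Xi = [0,1]\times\Pi$; "uniform on $\Xi^n$" means all coordinates $(u_i,\pi_i)$ are independent with $u_i \sim \mathrm{Unif}([0,1])$ and $\pi_i$ uniform on $\Pi$. A language model $p$ gives next-token distributions $p(\cdot \mid x)$; $y_{:i-1}=(y_1,\dots,y_{i-1})$. Decoder: $\Gamma((u,\pi),\mu) := \pi^{-1}(\min\{\pi(i) : \mu(\{j : \pi(j)\le\pi(i)\}) \ge u\})$. $\mathtt{generate}(\xi;m,p,\Gamma)$ outputs $y\in[N]^m$ with $y_i = \Gamma(\xi_i,p(\cdot\mid y_{:i-1}))$. With $\eta(i) := (i-1)/(N-1)$, the alignment cost of a string $y$ and key sequence $(u,\pi)=((u_1,\pi_1),\dots)$ of the same length is $d(y,(u,\pi)) := -\sum_{i=1}^{|y|}(u_i-1/2)(\eta(\pi_i(y_i))-1/2)$. Test statistic with block size $k$: for $y$ of length $L \ge k$ and $\xi \in \Xi^n$, $\phi(y,\xi)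 := \min_{1\le i\le L-k+1,\ 1\le j\le n} d\big((y_{i},\dots,y_{i+k-1}),(\xi_{j},\xi_{j+1},\dots,\xi_{j+k-1})\big)$, key indices taken cyclically modulo $n$. $C_0 := \mathrm{Var}(\eta(I))$ for $I$ uniform on $[N]$. Watermark potential: $\alpha(y) := 1 - \frac{1}{|y|}\sum_{i=1}^{|y|} p(y_i\mid y_{:i-1})$. *)

theory Defs
  imports "HOL-Probability.Probability" "HOL-Combinatorics.Permutations"
begin

text \<open>Vocabulary [N] = {1..N}. Key sequences xi are functions nat => real * (nat => nat),
indexed from 0 (xi 0 is the paper's xi_1).\<close>

type_synonym key = "real \<times> (nat \<Rightarrow> nat)"

definition perms :: "nat \<Rightarrow> (nat \<Rightarrow> nat) set" where
  "perms N = {\<pi>. \<pi> permutes {1..N}}"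

definition key_measure :: "nat \<Rightarrow> key measure" where
  "key_measure N = uniform_measure lborel {0..1::real} \<Otimes>\<^sub>M uniform_count_measure (perms N)"

definition keyseq_measure :: "nat \<Rightarrow> nat \<Rightarrow> (nat \<Rightarrow> key) measure" where
  "keyseq_measure N n = PiM {..<n} (\<lambda>_. key_measure N)"

definition decode :: "nat \<Rightarrow> key \<Rightarrow> (nat \<Rightarrow> real) \<Rightarrow> nat" where
  "decode N \<xi> \<mu> = (case \<xi> of (u, \<pi>) \<Rightarrow>
      inv_into {1..N} \<pi>
        (Min {\<pi> i | i. i \<in> {1..N} \<and> (\<Sum>j\<in>{j\<in>{1..N}. \<pi> j \<le> \<pi> i}. \<mu> j) \<ge> u}))"

text \<open>Language model: p ys is the next-token distribution given the prefix ys.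
generate: y_i = Gamma(xi_i, p(. | y_{:i-1})); gen N p xi i is the length-i output.\<close>
fun gen :: "nat \<Rightarrow> (nat list \<Rightarrow> nat \<Rightarrow> real) \<Rightarrow> (nat \<Rightarrow> key) \<Rightarrow> nat \<Rightarrow> nat list" where
  "gen N p \<xi> 0 = []"
| "gen N p \<xi> (Suc i) = (let ys = gen N p \<xi> i in ys @ [decode N (\<xi> i) (p ys)])"

definition eta :: "nat \<Rightarrow> nat \<Rightarrow> real" where
  "eta N i = (real i - 1) / (real N - 1)"

definition align_cost :: "nat \<Rightarrow> nat list \<Rightarrow> (nat \<Rightarrow> key) \<Rightarrow> real" where
  "align_cost N ys \<kappa> =
     - (\<Sum>l<length ys. (fst (\<kappa> l) - 1/2) * (eta N (snd (\<kappa> l) (ys ! l)) - 1/2))"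

definition test_stat :: "nat \<Rightarrow> nat \<Rightarrow> nat \<Rightarrow> nat list \<Rightarrow> (nat \<Rightarrow> key) \<Rightarrow> real" where
  "test_stat N n k ys \<xi> =
     Min {align_cost N (take k (drop i ys)) (\<lambda>l. \<xi> ((j + l) mod n)) | i j.
            i \<le> length ys - k \<and> j < n}"

definition C0 :: "nat \<Rightarrow> real" where
  "C0 N = measure_pmf.variance (pmf_of_set {1..N}) (\<lambda>i. eta N i)"

definition wm_potential :: "(nat list \<Rightarrow> nat \<Rightarrow> real) \<Rightarrow> nat list \<Rightarrow> real" where
  "wm_potential p ys = 1 - (1 / real (length ys)) * (\<Sum>i<length ys. p (take i ys) (ys ! i))"

end

theory Submission
  imports Defs
begin

text \<open>
  Let \<open>c\<^sub>j(\<xi>')\<close> be the alignment cost of the text against the \<open>j\<close>-th cyclic shift of the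
  independent key \<open>\<xi>'\<close>. The statistic under \<open>\<xi>\<close> is at most the unshifted cost \<open>c(\<xi>)\<close>, and the
  statistic under \<open>\<xi>'\<close> is attained at some shift, so the event in question forces
  \<open>c\<^sub>j(\<xi>') \<le> c(\<xi>)\<close> for some \<open>j < n\<close>. For \<open>\<lambda> \<ge> 0\<close>, a union bound and the exponential Markov
  inequality bound its probability jointly with \<open>Y = y\<close> by
  \<open>\<Sum>\<^sub>j E[exp(\<lambda> c(\<xi>)); Y = y] E[exp(-\<lambda> c\<^sub>j(\<xi>'))]\<close>, and both expectations factor over the
  \<open>m\<close> independent key positions. Each factor involves the score
  \<open>(u - 1/2)(\<eta>(\<pi> t) - 1/2) \<in> [-1/4, 1/4]\<close>. It has mean \<open>0\<close> under the key distribution, and on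
  the event that position \<open>i\<close> decodes to \<open>y\<^sub>i\<close>, of probability \<open>p\<^sub>i\<close>, it has conditional mean
  \<open>(1 - p\<^sub>i) C\<^sub>0\<close>, by a symmetry argument over the uniformly random permutation. Hoeffding's lemma
  bounds the probability by \<open>n (\<Prod> p\<^sub>i) exp(-\<lambda> C\<^sub>0 m \<alpha> + m \<lambda>\<^sup>2/16)\<close>; with
  \<open>\<lambda> = 8 \<alpha> C\<^sub>0\<close> and \<open>P(Y = y) = \<Prod> p\<^sub>i\<close> the conditional probability is at most
  \<open>n exp(-4 m C\<^sub>0\<^sup>2 \<alpha>\<^sup>2)\<close>, which is stronger than the claim.
\<close>

section \<open>Hoeffding's lemma restricted to an event\<close>

lemma integral_uniform_measure:
  fixes X :: "'a \<Rightarrow> real"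
  assumes A: "A \<in> sets M" "emeasure M A \<noteq> 0" "emeasure M A \<noteq> \<infinity>" and X: "X \<in> borel_measurable M"
  shows "(\<integral>x. X x \<partial>uniform_measure M A) = (\<integral>x. indicator A x * X x \<partial>M) / measure M A"
proof -
  have pos: "0 < measure M A"
    using A by (simp add: emeasure_eq_ennreal_measure zero_less_measure_iff)
  have "(1::ennreal) / ennreal (measure M A) = ennreal (1 / measure M A)"
    using divide_ennreal[of 1 "measure M A"] pos by simp
  then have "(\<lambda>x. indicator A x / emeasure M A) = (\<lambda>x. ennreal (indicator A x / measure M A))"
    using A by (intro ext) (simp add: emeasure_eq_ennreal_measure split: split_indicator)
  then have "uniform_measure M A = density M (\<lambda>x. ennreal (indicator A x / measure M A))"
    unfolding uniform_measure_def by simp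
  then show ?thesis using A X by (simp add: integral_density)
qed

lemma (in interval_bounded_random_variable) Hoeffdings_lemma_nn_integral_exp:
  assumes "0 \<le> l"
  shows "(\<integral>\<^sup>+x. ennreal (exp (l * f x)) \<partial>M) \<le> ennreal (exp (l * expectation f + l\<^sup>2 * (b - a)\<^sup>2 / 8))"
proof (cases "l = 0")
  case False
  have "(\<integral>\<^sup>+x. ennreal (exp (l * f x)) \<partial>M)
      = (\<integral>\<^sup>+x. ennreal (exp (l * (f x - expectation f))) * ennreal (exp (l * expectation f)) \<partial>M)"
    by (intro nn_integral_cong) (simp add: algebra_simps flip: exp_add ennreal_mult)
  also have "\<dots> = (\<integral>\<^sup>+x. ennreal (exp (l * (f x - expectation f))) \<partial>M) * ennreal (exp (l * expectation f))"
    by (rule nn_integral_multc) measurable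
  also have "\<dots> \<le> ennreal (exp (l\<^sup>2 * (b - a)\<^sup>2 / 8)) * ennreal (exp (l * expectation f))"
    using Hoeffdings_lemma_nn_integral[of l] False assms by (intro mult_right_mono) auto
  finally show ?thesis by (simp add: add.commute flip: exp_add ennreal_mult)
qed (simp add: emeasure_space_1)

text \<open>No positivity assumption on \<open>prob A\<close> is needed: if it vanishes, so do both sides, the right-hand
  side because \<open>x / 0 = 0\<close>.\<close>
lemma (in prob_space) Hoeffdings_lemma_nn_integral_indicator:
  assumes A: "A \<in> events" and X: "X \<in> borel_measurable M"
    and bounds: "AE x in M. X x \<in> {a..b}" and l: "0 \<le> l"
  shows "(\<integral>\<^sup>+x. indicator A x * ennreal (exp (l * X x)) \<partial>M)
       \<le> ennreal (prob A * exp (l * (\<integral>x. indicator A x * X x \<partial>M) / prob A + l\<^sup>2 * (b - a)\<^sup>2 / 8))"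
proof (cases "prob A = 0")
  case True
  then have "A \<in> null_sets M" using A by (simp add: null_sets_def emeasure_eq_measure)
  then have "AE x in M. x \<notin> A" by (rule AE_not_in)
  then have "(\<integral>\<^sup>+x. indicator A x * ennreal (exp (l * X x)) \<partial>M) = 0"
    by (subst nn_integral_0_iff_AE) (use A X in \<open>auto elim!: eventually_mono\<close>)
  then show ?thesis by simp
next
  case False
  let ?U = "uniform_measure M A"
  have emA: "emeasure M A = ennreal (prob A)" and pos: "0 < prob A"
    using False emeasure_eq_measure by (auto simp: less_le)
  interpret U: prob_space ?U
    by (rule prob_space_uniform_measure) (use emA pos in auto)
  interpret X: interval_bounded_random_variable ?U X a b
  proof unfold_locales
    show "X \<in> borel_measurable ?U" using X by (simp cong: measurable_cong_sets)
    show "AE x in ?U. X x \<in> {a..b}" by (rule AE_uniform_measureI[OF A]) (use bounds in auto)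
  qed
  have e: "U.expectation X = (\<integral>x. indicator A x * X x \<partial>M) / prob A"
    using integral_uniform_measure[OF A _ _ X] emA pos by simp
  have "ennreal (prob A) / ennreal (prob A) = 1" using pos by (simp add: divide_ennreal)
  moreover have "(\<integral>\<^sup>+x. ennreal (exp (l * X x)) \<partial>?U)
      = (\<integral>\<^sup>+x. indicator A x * ennreal (exp (l * X x)) \<partial>M) / ennreal (prob A)"
    using nn_integral_uniform_measure[of "\<lambda>x. ennreal (exp (l * X x))" M A] A X emA
    by (simp add: mult.commute)
  ultimately have "(\<integral>\<^sup>+x. indicator A x * ennreal (exp (l * X x)) \<partial>M)
      = (\<integral>\<^sup>+x. ennreal (exp (l * X x)) \<partial>?U) * ennreal (prob A)"
    by (simp only: ennreal_divide_times mult_1_right)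
  also have "\<dots> \<le> ennreal (exp (l * U.expectation X + l\<^sup>2 * (b - a)\<^sup>2 / 8)) * ennreal (prob A)"
    by (intro mult_right_mono X.Hoeffdings_lemma_nn_integral_exp l) simp
  finally show ?thesis
    using pos unfolding e by (simp add: mult.commute ennreal_mult)
qed

section \<open>Integrals over product measures\<close>

lemma prod_mono_ennreal: "(\<And>i. i \<in> A \<Longrightarrow> (f i :: ennreal) \<le> g i) \<Longrightarrow> prod f A \<le> prod g A"
  by (induction A rule: infinite_finite_induct) (auto intro!: mult_mono)

lemma ennreal_exp_sum: "finite A \<Longrightarrow> ennreal (exp (\<Sum>i\<in>A. f i)) = (\<Prod>i\<in>A. ennreal (exp (f i)))"
  by (simp add: prod_ennreal exp_sum)

lemma nn_integral_pair_measure_mult: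
  assumes "sigma_finite_measure M2"
    and f: "f \<in> borel_measurable M1" and g: "g \<in> borel_measurable M2"
  shows "(\<integral>\<^sup>+\<omega>. f (fst \<omega>) * g (snd \<omega>) \<partial>(M1 \<Otimes>\<^sub>M M2)) = (\<integral>\<^sup>+x. f x \<partial>M1) * (\<integral>\<^sup>+y. g y \<partial>M2)"
proof -
  interpret M2: sigma_finite_measure M2 by fact
  have "(\<integral>\<^sup>+\<omega>. f (fst \<omega>) * g (snd \<omega>) \<partial>(M1 \<Otimes>\<^sub>M M2)) = (\<integral>\<^sup>+x. \<integral>\<^sup>+y. f x * g y \<partial>M2 \<partial>M1)"
    using M2.nn_integral_fst[of "\<lambda>\<omega>. f (fst \<omega>) * g (snd \<omega>)"] f g by simp
  also have "\<dots> = (\<integral>\<^sup>+x. f x * (\<integral>\<^sup>+y. g y \<partial>M2) \<partial>M1)"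
    by (intro nn_integral_cong nn_integral_cmult g)
  also have "\<dots> = (\<integral>\<^sup>+x. f x \<partial>M1) * (\<integral>\<^sup>+y. g y \<partial>M2)"
    by (rule nn_integral_multc[OF f])
  finally show ?thesis .
qed

lemma emeasure_pair_measure_le_sum_mult:
  assumes "sigma_finite_measure M2" and F: "F \<in> borel_measurable M1" and G: "\<And>j. G j \<in> borel_measurable M2"
    and A: "A \<in> sets (M1 \<Otimes>\<^sub>M M2)"
    and le: "\<And>\<omega>. \<omega> \<in> space (M1 \<Otimes>\<^sub>M M2) \<Longrightarrow> indicator A \<omega> \<le> (\<Sum>j\<in>J. F (fst \<omega>) * G j (snd \<omega>))"
  shows "emeasure (M1 \<Otimes>\<^sub>M M2) A \<le> (\<Sum>j\<in>J. (\<integral>\<^sup>+x. F x \<partial>M1) * (\<integral>\<^sup>+y. G j y \<partial>M2))"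
proof -
  have "emeasure (M1 \<Otimes>\<^sub>M M2) A = (\<integral>\<^sup>+\<omega>. indicator A \<omega> \<partial>(M1 \<Otimes>\<^sub>M M2))" using A by simp
  also have "\<dots> \<le> (\<integral>\<^sup>+\<omega>. (\<Sum>j\<in>J. F (fst \<omega>) * G j (snd \<omega>)) \<partial>(M1 \<Otimes>\<^sub>M M2))"
    by (rule nn_integral_mono) (rule le)
  also have "\<dots> = (\<Sum>j\<in>J. \<integral>\<^sup>+\<omega>. F (fst \<omega>) * G j (snd \<omega>) \<partial>(M1 \<Otimes>\<^sub>M M2))"
    by (rule nn_integral_sum) (use F G in measurable)
  also have "\<dots> = (\<Sum>j\<in>J. (\<integral>\<^sup>+x. F x \<partial>M1) * (\<integral>\<^sup>+y. G j y \<partial>M2))"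
    by (intro sum.cong refl nn_integral_pair_measure_mult assms(1) F G)
  finally show ?thesis .
qed

lemma (in prob_space) measure_pair_measure_fst:
  assumes "{x \<in> space N. P x} \<in> sets N"
  shows "measure (N \<Otimes>\<^sub>M M) {\<omega> \<in> space (N \<Otimes>\<^sub>M M). P (fst \<omega>)} = measure N {x \<in> space N. P x}"
proof -
  have "{\<omega> \<in> space (N \<Otimes>\<^sub>M M). P (fst \<omega>)} = {x \<in> space N. P x} \<times> space M"
    by (auto simp: space_pair_measure)
  then show ?thesis
    using emeasure_pair_measure_Times[OF assms sets.top] by (simp add: measure_def emeasure_space_1)
qed

lemma (in prob_space) nn_integral_PiM_prod_inj:
  assumes I: "finite I" and \<sigma>: "inj_on \<sigma> J" "\<sigma> ` J \<subseteq> I"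
    and f: "\<And>l. l \<in> J \<Longrightarrow> f l \<in> borel_measurable M"
  shows "(\<integral>\<^sup>+\<xi>. (\<Prod>l\<in>J. f l (\<xi> (\<sigma> l))) \<partial>PiM I (\<lambda>_. M)) = (\<Prod>l\<in>J. \<integral>\<^sup>+\<kappa>. f l \<kappa> \<partial>M)"
proof -
  interpret P: product_prob_space "\<lambda>_. M" I
    by (simp add: product_prob_space_def product_prob_space_axioms_def product_sigma_finite_def
        prob_space_axioms prob_space_imp_sigma_finite)
  define G where "G k = (if k \<in> \<sigma> ` J then f (the_inv_into J \<sigma> k) else (\<lambda>_. 1))" for k
  have G_\<sigma>: "G (\<sigma> l) = f l" if "l \<in> J" for l
    unfolding G_def using the_inv_into_f_f[OF \<sigma>(1) that] that by simp
  have "(\<integral>\<^sup>+\<xi>. (\<Prod>l\<in>J. f l (\<xi> (\<sigma> l))) \<partial>PiM I (\<lambda>_. M)) = (\<integral>\<^sup>+\<xi>. (\<Prod>k\<in>I. G k (\<xi> k)) \<partial>PiM I (\<lambda>_. M))"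
  proof (intro nn_integral_cong)
    fix \<xi> :: "'b \<Rightarrow> 'a"
    have "(\<Prod>k\<in>I. G k (\<xi> k)) = (\<Prod>k\<in>\<sigma> ` J. G k (\<xi> k))"
      by (rule prod.mono_neutral_right) (use I \<sigma>(2) in \<open>auto simp: G_def\<close>)
    also have "\<dots> = (\<Prod>l\<in>J. f l (\<xi> (\<sigma> l)))"
      by (simp add: prod.reindex[OF \<sigma>(1)] G_\<sigma>)
    finally show "(\<Prod>l\<in>J. f l (\<xi> (\<sigma> l))) = (\<Prod>k\<in>I. G k (\<xi> k))" ..
  qed
  also have "\<dots> = (\<Prod>k\<in>I. \<integral>\<^sup>+\<kappa>. G k \<kappa> \<partial>M)"
    by (rule P.product_nn_integral_prod[OF I]) (auto simp: G_def intro!: f the_inv_into_into[OF \<sigma>(1)])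
  also have "\<dots> = (\<Prod>k\<in>\<sigma> ` J. \<integral>\<^sup>+\<kappa>. G k \<kappa> \<partial>M)"
    by (rule prod.mono_neutral_right) (use I \<sigma>(2) in \<open>auto simp: G_def emeasure_space_1\<close>)
  also have "\<dots> = (\<Prod>l\<in>J. \<integral>\<^sup>+\<kappa>. f l \<kappa> \<partial>M)"
    by (simp add: prod.reindex[OF \<sigma>(1)] G_\<sigma>)
  finally show ?thesis .
qed

section \<open>Permutations of the vocabulary\<close>

lemma perms_finite: "finite (perms N)"
  unfolding perms_def by (simp add: finite_permutations)

lemma perms_nonempty: "perms N \<noteq> {}"
  unfolding perms_def using permutes_id by blast

lemma perms_image: "\<pi> \<in> perms N \<Longrightarrow> \<pi> ` {1..N} = {1..N}"
  unfolding perms_def by (simp add: permutes_image)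

lemma perms_in: "\<pi> \<in> perms N \<Longrightarrow> x \<in> {1..N} \<Longrightarrow> \<pi> x \<in> {1..N}"
  unfolding perms_def by (metis mem_Collect_eq permutes_in_image)

lemma perms_inj: "\<pi> \<in> perms N \<Longrightarrow> inj \<pi>"
  unfolding perms_def by (simp add: permutes_inj)

lemma perms_inv_into_eq_iff:
  assumes \<pi>: "\<pi> \<in> perms N" and "s \<in> {1..N}" and "t \<in> {1..N}"
  shows "inv_into {1..N} \<pi> s = t \<longleftrightarrow> s = \<pi> t"
proof
  assume "inv_into {1..N} \<pi> s = t"
  then show "s = \<pi> t" using f_inv_into_f[of s \<pi> "{1..N}"] perms_image[OF \<pi>] assms(2) by auto
next
  assume "s = \<pi> t"
  then show "inv_into {1..N} \<pi> s = t"
    using inv_into_f_f[OF inj_on_subset[OF perms_inj[OF \<pi>]] assms(3)] by simp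
qed

lemma transpose_comp_perms:
  "a \<in> {1..N} \<Longrightarrow> b \<in> {1..N} \<Longrightarrow> \<pi> \<in> perms N \<Longrightarrow> Transposition.transpose a b \<circ> \<pi> \<in> perms N"
  unfolding perms_def by (simp add: permutes_compose permutes_swap_id)

lemma comp_transpose_perms:
  "a \<in> {1..N} \<Longrightarrow> b \<in> {1..N} \<Longrightarrow> \<pi> \<in> perms N \<Longrightarrow> \<pi> \<circ> Transposition.transpose a b \<in> perms N"
  unfolding perms_def by (simp add: permutes_compose permutes_swap_id)

lemma card_perms_at_eq:
  assumes "t \<in> {1..N}" "r \<in> {1..N}" "r' \<in> {1..N}"
  shows "card {\<pi>\<in>perms N. \<pi> t = r} = card {\<pi>\<in>perms N. \<pi> t = r'}"
proof (rule bij_betw_same_card)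
  let ?\<tau> = "Transposition.transpose r r'"
  have "?\<tau> \<circ> \<pi> \<in> perms N" if "\<pi> \<in> perms N" for \<pi>
    using transpose_comp_perms[OF assms(2,3) that] .
  then show "bij_betw ((\<circ>) ?\<tau>) {\<pi>\<in>perms N. \<pi> t = r} {\<pi>\<in>perms N. \<pi> t = r'}"
    by (intro bij_betw_byWitness[where f'="(\<circ>) ?\<tau>"]) (simp_all add: o_assoc image_subset_iff)
qed

lemma sum_perms_at:
  fixes G :: "nat \<Rightarrow> real"
  assumes t: "t \<in> {1..N}"
  shows "(\<Sum>\<pi>\<in>perms N. G (\<pi> t)) = real (card (perms N)) / real N * (\<Sum>r\<in>{1..N}. G r)"
proof -
  define c where "c = card {\<pi>\<in>perms N. \<pi> t = t}"
  have sum_eq: "(\<Sum>\<pi>\<in>perms N. G (\<pi> t)) = real c * (\<Sum>r\<in>{1..N}. G r)" for G :: "nat \<Rightarrow> real"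
  proof -
    have "(\<Sum>\<pi>\<in>perms N. G (\<pi> t)) = (\<Sum>\<pi>\<in>perms N. \<Sum>r\<in>{1..N}. if \<pi> t = r then G r else 0)"
      by (intro sum.cong refl) (use perms_in[OF _ t] in auto)
    also have "\<dots> = (\<Sum>r\<in>{1..N}. \<Sum>\<pi>\<in>perms N. if \<pi> t = r then G r else 0)"
      by (rule sum.swap)
    also have "\<dots> = (\<Sum>r\<in>{1..N}. real c * G r)"
    proof (intro sum.cong refl)
      fix r assume r: "r \<in> {1..N}"
      have "(\<Sum>\<pi>\<in>perms N. if \<pi> t = r then G r else 0) = (\<Sum>\<pi>\<in>{\<pi>\<in>perms N. \<pi> t = r}. G r)"
        by (rule sum.inter_filter[symmetric]) (rule perms_finite)
      moreover have "card {\<pi>\<in>perms N. \<pi> t = r} = c"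
        unfolding c_def by (rule card_perms_at_eq[OF t r t])
      ultimately show "(\<Sum>\<pi>\<in>perms N. if \<pi> t = r then G r else 0) = real c * G r" by simp
    qed
    finally show ?thesis by (simp add: sum_distrib_left)
  qed
  have "real (card (perms N)) = real c * real N"
    using sum_eq[of "\<lambda>_. 1"] by simp
  moreover have "N > 0" using t by simp
  ultimately show ?thesis by (simp add: sum_eq)
qed

lemma sum_perms_below_indep:
  fixes g :: "nat \<Rightarrow> real"
  assumes "j \<in> {1..N} - {t}" and "j' \<in> {1..N} - {t}"
  shows "(\<Sum>\<pi>\<in>perms N. if \<pi> j < \<pi> t then g (\<pi> t) else 0)
       = (\<Sum>\<pi>\<in>perms N. if \<pi> j' < \<pi> t then g (\<pi> t) else 0)"
proof -
  let ?\<tau> = "Transposition.transpose j j'"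
  show ?thesis
    by (rule sum.reindex_bij_witness[where i="\<lambda>\<pi>. \<pi> \<circ> ?\<tau>" and j="\<lambda>\<pi>. \<pi> \<circ> ?\<tau>"])
       (use assms in \<open>auto simp: comp_transpose_perms o_assoc[symmetric] transpose_def\<close>)
qed

lemma card_ranked_below:
  assumes \<pi>: "\<pi> \<in> perms N" and t: "t \<in> {1..N}"
  shows "card {j\<in>{1..N}. \<pi> j < \<pi> t} = \<pi> t - 1"
proof -
  have "\<pi> ` {j\<in>{1..N}. \<pi> j < \<pi> t} = {1..<\<pi> t}"
  proof (intro equalityI subsetI)
    fix r assume "r \<in> {1..<\<pi> t}"
    moreover then have "r \<in> \<pi> ` {1..N}" using perms_image[OF \<pi>] perms_in[OF \<pi> t] by auto
    ultimately show "r \<in> \<pi> ` {j\<in>{1..N}. \<pi> j < \<pi> t}" by auto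
  qed (use perms_in[OF \<pi>] in auto)
  moreover have "inj_on \<pi> {j\<in>{1..N}. \<pi> j < \<pi> t}"
    using perms_inj[OF \<pi>] by (simp add: inj_on_def inj_def)
  ultimately show ?thesis by (metis card_atLeastLessThan card_image)
qed

section \<open>The constant C0\<close>

lemma eta_bounds: "2 \<le> N \<Longrightarrow> r \<in> {1..N} \<Longrightarrow> eta N r \<in> {0..1}"
  by (auto simp: eta_def field_simps)

lemma sum_eta:
  assumes "2 \<le> N" shows "(\<Sum>r\<in>{1..N}. eta N r) = real N / 2"
proof -
  have gauss: "(\<Sum>r\<in>{1..N}. real r - 1) = real N / 2 * (real N - 1)" for N
    by (induction N) (simp_all add: atLeastAtMostSuc_conv field_simps)
  have "(\<Sum>r\<in>{1..N}. eta N r) = (\<Sum>r\<in>{1..N}. real r - 1) / (real N - 1)"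
    unfolding eta_def by (simp add: sum_divide_distrib)
  also have "\<dots> = real N / 2"
    unfolding gauss by (rule nonzero_mult_div_cancel_right) (use assms in simp)
  finally show ?thesis .
qed

lemma sum_eta_centered:
  assumes "2 \<le> N" shows "(\<Sum>r\<in>{1..N}. eta N r - 1/2) = 0"
  using sum_eta[OF assms] by (simp add: sum_subtractf)

lemma C0_eq:
  assumes "2 \<le> N" shows "C0 N = (\<Sum>r\<in>{1..N}. (eta N r - 1/2)\<^sup>2) / real N"
proof -
  have ne: "{1..N} \<noteq> {}" "finite {1..N}" using assms by auto
  have "measure_pmf.expectation (pmf_of_set {1..N}) (eta N) = 1/2"
    using integral_pmf_of_set[OF ne] sum_eta[OF assms] assms by simp
  then show ?thesis unfolding C0_def using integral_pmf_of_set[OF ne] by simp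
qed

lemma C0_nonneg: "2 \<le> N \<Longrightarrow> 0 \<le> C0 N"
  by (simp add: C0_eq sum_nonneg)

definition mass_below :: "nat \<Rightarrow> (nat \<Rightarrow> real) \<Rightarrow> (nat \<Rightarrow> nat) \<Rightarrow> nat \<Rightarrow> real" where
  "mass_below N \<mu> \<pi> t = (\<Sum>j\<in>{j\<in>{1..N}. \<pi> j < \<pi> t}. \<mu> j)"

lemma mass_below_bounds:
  assumes \<pi>: "\<pi> \<in> perms N" and t: "t \<in> {1..N}"
    and nn: "\<And>j. 0 \<le> \<mu> j" and msum: "(\<Sum>j\<in>{1..N}. \<mu> j) = 1"
  shows "0 \<le> mass_below N \<mu> \<pi> t" "mass_below N \<mu> \<pi> t + \<mu> t \<le> 1"
proof -
  show "0 \<le> mass_below N \<mu> \<pi> t" unfolding mass_below_def by (rule sum_nonneg) (use nn in auto)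
  have "mass_below N \<mu> \<pi> t + \<mu> t = (\<Sum>j\<in>insert t {j\<in>{1..N}. \<pi> j < \<pi> t}. \<mu> j)"
    unfolding mass_below_def by simp
  also have "\<dots> \<le> (\<Sum>j\<in>{1..N}. \<mu> j)" by (rule sum_mono2) (use t nn in auto)
  finally show "mass_below N \<mu> \<pi> t + \<mu> t \<le> 1" using msum by simp
qed

text \<open>All tokens \<open>j \<noteq> t\<close> give the same sum, and summing over them turns the indicator of
  \<open>\<pi> j < \<pi> t\<close> into the rank \<open>\<pi> t - 1 = (N - 1) \<eta>(\<pi> t)\<close>.\<close>
lemma sum_perms_below_eta:
  assumes N: "2 \<le> N" and t: "t \<in> {1..N}" and j: "j \<in> {1..N} - {t}"
  shows "(\<Sum>\<pi>\<in>perms N. if \<pi> j < \<pi> t then eta N (\<pi> t) - 1/2 else 0) = real (card (perms N)) * C0 N"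
proof -
  define S where "S = {1..N} - {t}"
  define g where "g r = eta N r - 1/2" for r
  define h where "h i = (\<Sum>\<pi>\<in>perms N. if \<pi> i < \<pi> t then g (\<pi> t) else 0)" for i
  have "(\<Sum>i\<in>S. h i) = (\<Sum>\<pi>\<in>perms N. \<Sum>i\<in>S. if \<pi> i < \<pi> t then g (\<pi> t) else 0)"
    unfolding h_def by (rule sum.swap)
  also have "\<dots> = (\<Sum>\<pi>\<in>perms N. (real N - 1) * (eta N (\<pi> t) * g (\<pi> t)))"
  proof (intro sum.cong refl)
    fix \<pi> assume \<pi>: "\<pi> \<in> perms N"
    have "(\<Sum>i\<in>S. if \<pi> i < \<pi> t then g (\<pi> t) else 0) = (\<Sum>i\<in>{i\<in>S. \<pi> i < \<pi> t}. g (\<pi> t))"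
      by (rule sum.inter_filter[symmetric]) (simp add: S_def)
    also have "{i\<in>S. \<pi> i < \<pi> t} = {i\<in>{1..N}. \<pi> i < \<pi> t}" by (auto simp: S_def)
    finally have "(\<Sum>i\<in>S. if \<pi> i < \<pi> t then g (\<pi> t) else 0) = real (\<pi> t - 1) * g (\<pi> t)"
      using card_ranked_below[OF \<pi> t] by simp
    also have "real (\<pi> t - 1) = (real N - 1) * eta N (\<pi> t)"
      using perms_in[OF \<pi> t] N by (simp add: eta_def of_nat_diff)
    finally show "(\<Sum>i\<in>S. if \<pi> i < \<pi> t then g (\<pi> t) else 0) = (real N - 1) * (eta N (\<pi> t) * g (\<pi> t))"
      by simp
  qed
  also have "\<dots> = (real N - 1) * (real (card (perms N)) / real N * (\<Sum>r\<in>{1..N}. eta N r * g r))"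
    unfolding sum_perms_at[OF t, of "\<lambda>r. eta N r * g r", symmetric] by (simp add: sum_distrib_left)
  moreover have "(\<Sum>i\<in>S. h i) = (\<Sum>i\<in>S. h j)"
    using j by (intro sum.cong refl) (unfold h_def, rule sum_perms_below_indep, simp_all add: S_def)
  then have "(\<Sum>i\<in>S. h i) = (real N - 1) * h j"
    using t N by (simp add: S_def of_nat_diff)
  ultimately have "(real N - 1) * h j = (real N - 1) * (real (card (perms N)) / real N * (\<Sum>r\<in>{1..N}. eta N r * g r))"
    by simp
  moreover have "real N - 1 \<noteq> 0" using N by simp
  ultimately have "h j = real (card (perms N)) / real N * (\<Sum>r\<in>{1..N}. eta N r * g r)"
    using mult_left_cancel by blast
  also have "(\<Sum>r\<in>{1..N}. eta N r * g r) = (\<Sum>r\<in>{1..N}. (g r)\<^sup>2 + g r / 2)"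
    by (intro sum.cong refl) (simp add: g_def power2_eq_square field_simps)
  also have "\<dots> = (\<Sum>r\<in>{1..N}. (g r)\<^sup>2) + (\<Sum>r\<in>{1..N}. g r) / 2"
    by (simp add: sum.distrib sum_divide_distrib)
  finally show ?thesis
    using sum_eta_centered[OF N] unfolding h_def g_def by (simp add: C0_eq[OF N])
qed

lemma sum_perms_mass_below_eta:
  fixes \<mu> :: "nat \<Rightarrow> real"
  assumes N: "2 \<le> N" and t: "t \<in> {1..N}" and msum: "(\<Sum>j\<in>{1..N}. \<mu> j) = 1"
  shows "(\<Sum>\<pi>\<in>perms N. (mass_below N \<mu> \<pi> t + \<mu> t / 2 - 1/2) * (eta N (\<pi> t) - 1/2))
         = real (card (perms N)) * (1 - \<mu> t) * C0 N"
proof -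
  define S where "S = {1..N} - {t}"
  define g where "g \<pi> j = (if \<pi> j < \<pi> t then eta N (\<pi> t) - 1/2 else 0)" for \<pi> :: "nat \<Rightarrow> nat" and j
  have "(\<Sum>\<pi>\<in>perms N. (mass_below N \<mu> \<pi> t + \<mu> t / 2 - 1/2) * (eta N (\<pi> t) - 1/2))
      = (\<Sum>\<pi>\<in>perms N. (\<Sum>j\<in>S. \<mu> j * g \<pi> j) + (\<mu> t / 2 - 1/2) * (eta N (\<pi> t) - 1/2))"
  proof (intro sum.cong refl)
    fix \<pi> :: "nat \<Rightarrow> nat"
    have "{j\<in>{1..N}. \<pi> j < \<pi> t} = {j\<in>S. \<pi> j < \<pi> t}" by (auto simp: S_def)
    then have "mass_below N \<mu> \<pi> t = (\<Sum>j\<in>{j\<in>S. \<pi> j < \<pi> t}. \<mu> j)"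
      unfolding mass_below_def by simp
    also have "\<dots> = (\<Sum>j\<in>S. if \<pi> j < \<pi> t then \<mu> j else 0)"
      by (rule sum.inter_filter) (simp add: S_def)
    finally have "mass_below N \<mu> \<pi> t * (eta N (\<pi> t) - 1/2) = (\<Sum>j\<in>S. \<mu> j * g \<pi> j)"
      by (simp add: sum_distrib_right) (intro sum.cong refl, simp add: g_def)
    then show "(mass_below N \<mu> \<pi> t + \<mu> t / 2 - 1/2) * (eta N (\<pi> t) - 1/2)
        = (\<Sum>j\<in>S. \<mu> j * g \<pi> j) + (\<mu> t / 2 - 1/2) * (eta N (\<pi> t) - 1/2)"
      by (simp add: algebra_simps)
  qed
  also have "\<dots> = (\<Sum>j\<in>S. \<mu> j * (\<Sum>\<pi>\<in>perms N. g \<pi> j)) + (\<mu> t / 2 - 1/2) * (\<Sum>\<pi>\<in>perms N. eta N (\<pi> t) - 1/2)"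
    unfolding sum.distrib sum_distrib_left by (subst sum.swap) (rule refl)
  also have "(\<Sum>\<pi>\<in>perms N. eta N (\<pi> t) - 1/2) = 0"
    using sum_perms_at[OF t, of "\<lambda>r. eta N r - 1/2"] sum_eta_centered[OF N] by simp
  also have "(\<Sum>j\<in>S. \<mu> j * (\<Sum>\<pi>\<in>perms N. g \<pi> j)) = (\<Sum>j\<in>S. \<mu> j) * (real (card (perms N)) * C0 N)"
    unfolding sum_distrib_right g_def S_def by (intro sum.cong refl) (simp add: sum_perms_below_eta[OF N t])
  also have "(\<Sum>j\<in>S. \<mu> j) = 1 - \<mu> t"
    using msum t sum.remove[of "{1..N}" t \<mu>] by (simp add: S_def)
  finally show ?thesis by simp
qed

section \<open>The inverse-transform decoder\<close>

lemma Min_threshold_eq_iff: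
  fixes C :: "nat \<Rightarrow> real"
  assumes "mono C" and r: "r \<in> {1..N}" and "C 0 < u" and "u \<le> C N"
  shows "Min {s\<in>{1..N}. u \<le> C s} = r \<longleftrightarrow> C (r - 1) < u \<and> u \<le> C r"
proof -
  let ?M = "{s\<in>{1..N}. u \<le> C s}"
  have fin: "finite ?M" and N_in: "N \<in> ?M" using assms by auto
  show ?thesis
  proof
    assume Min: "Min ?M = r"
    then have "u \<le> C r" using Min_in[OF fin] N_in by blast
    moreover have "C (r - 1) < u"
    proof (cases "r = 1")
      case False
      have "r - 1 \<notin> ?M"
      proof
        assume "r - 1 \<in> ?M"
        then have "r \<le> r - 1" using Min Min_le[OF fin] by blast
        then show False using False r by auto
      qed
      then show ?thesis using False r by auto
    qed (use assms in simp)
    ultimately show "C (r - 1) < u \<and> u \<le> C r" by simp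
  next
    assume r_crosses: "C (r - 1) < u \<and> u \<le> C r"
    have "r \<le> s" if "s \<in> ?M" for s
    proof (rule ccontr)
      assume "\<not> r \<le> s"
      then have "C s \<le> C (r - 1)" using \<open>mono C\<close> by (simp add: monoD)
      then show False using that r_crosses by simp
    qed
    then show "Min ?M = r" using r r_crosses by (intro Min_eqI) auto
  qed
qed

lemma decode_eq_inv_into_Min:
  assumes "\<pi> \<in> perms N"
  shows "decode N (u, \<pi>) \<mu>
       = inv_into {1..N} \<pi> (Min {s\<in>{1..N}. u \<le> (\<Sum>j\<in>{j\<in>{1..N}. \<pi> j \<le> s}. \<mu> j)})"
proof -
  have "{\<pi> i | i. i \<in> {1..N} \<and> u \<le> (\<Sum>j\<in>{j\<in>{1..N}. \<pi> j \<le> \<pi> i}. \<mu> j)}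
      = {s\<in>\<pi> ` {1..N}. u \<le> (\<Sum>j\<in>{j\<in>{1..N}. \<pi> j \<le> s}. \<mu> j)}" by blast
  then show ?thesis unfolding decode_def perms_image[OF assms] by simp
qed

lemma decode_in_vocab:
  assumes \<pi>: "\<pi> \<in> perms N" and "u \<le> 1" and msum: "(\<Sum>j\<in>{1..N}. \<mu> j) = 1"
  shows "decode N (u, \<pi>) \<mu> \<in> {1..N}"
proof -
  let ?M = "{s\<in>{1..N}. u \<le> (\<Sum>j\<in>{j\<in>{1..N}. \<pi> j \<le> s}. \<mu> j)}"
  have "N \<noteq> 0"
  proof
    assume "N = 0"
    then show False using msum by simp
  qed
  moreover have "{j\<in>{1..N}. \<pi> j \<le> N} = {1..N}" using perms_in[OF \<pi>] by auto
  ultimately have "N \<in> ?M" using assms by simp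
  then have "Min ?M \<in> ?M" by (intro Min_in) auto
  then have "Min ?M \<in> \<pi> ` {1..N}" using perms_image[OF \<pi>] by simp
  then show ?thesis unfolding decode_eq_inv_into_Min[OF \<pi>] by (rule inv_into_into)
qed

lemma decode_eq_iff:
  assumes \<pi>: "\<pi> \<in> perms N" and t: "t \<in> {1..N}"
    and nn: "\<And>j. 0 \<le> \<mu> j" and msum: "(\<Sum>j\<in>{1..N}. \<mu> j) = 1" and u: "0 < u" "u \<le> 1"
  shows "decode N (u, \<pi>) \<mu> = t \<longleftrightarrow> mass_below N \<mu> \<pi> t < u \<and> u \<le> mass_below N \<mu> \<pi> t + \<mu> t"
proof -
  define C where "C s = (\<Sum>j\<in>{j\<in>{1..N}. \<pi> j \<le> s}. \<mu> j)" for s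
  have "mono C"
    unfolding C_def by (intro monoI sum_mono2) (use nn in auto)
  have "{j\<in>{1..N}. \<pi> j \<le> 0} = {}" using perms_in[OF \<pi>] by fastforce
  then have "C 0 = 0" unfolding C_def by (metis sum.empty)
  have "{j\<in>{1..N}. \<pi> j \<le> N} = {1..N}" using perms_in[OF \<pi>] by auto
  then have "C N = 1" using msum by (simp add: C_def)
  have "{j\<in>{1..N}. \<pi> j \<le> \<pi> t - 1} = {j\<in>{1..N}. \<pi> j < \<pi> t}" using perms_in[OF \<pi> t] by auto
  then have C_pred: "C (\<pi> t - 1) = mass_below N \<mu> \<pi> t" by (simp add: C_def mass_below_def)
  have "{j\<in>{1..N}. \<pi> j \<le> \<pi> t} = insert t {j\<in>{1..N}. \<pi> j < \<pi> t}"
    using t by (auto simp: le_less inj_eq[OF perms_inj[OF \<pi>]])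
  then have C_at: "C (\<pi> t) = mass_below N \<mu> \<pi> t + \<mu> t" by (simp add: C_def mass_below_def)
  have "N \<in> {s\<in>{1..N}. u \<le> C s}" using \<open>C N = 1\<close> u t by simp
  then have "Min {s\<in>{1..N}. u \<le> C s} \<in> {s\<in>{1..N}. u \<le> C s}" by (intro Min_in) auto
  then have "Min {s\<in>{1..N}. u \<le> C s} \<in> {1..N}" by simp
  then have "decode N (u, \<pi>) \<mu> = t \<longleftrightarrow> Min {s\<in>{1..N}. u \<le> C s} = \<pi> t"
    unfolding decode_eq_inv_into_Min[OF \<pi>] C_def[symmetric]
    by (rule perms_inv_into_eq_iff[OF \<pi> _ t])
  also have "\<dots> \<longleftrightarrow> C (\<pi> t - 1) < u \<and> u \<le> C (\<pi> t)"
    by (rule Min_threshold_eq_iff[OF \<open>mono C\<close> perms_in[OF \<pi> t]]) (use \<open>C 0 = 0\<close> \<open>C N = 1\<close> u in auto)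
  finally show ?thesis unfolding C_pred C_at .
qed

section \<open>The key distribution\<close>

lemma prob_space_key_measure: "prob_space (key_measure N)"
  unfolding key_measure_def
  by (intro prob_space_pair prob_space_uniform_measure prob_space_uniform_count_measure
      perms_finite perms_nonempty) auto

lemma space_key_measure: "space (key_measure N) = UNIV \<times> perms N"
  unfolding key_measure_def by (simp add: space_pair_measure space_uniform_count_measure)

lemma measurable_key_measure:
  assumes "\<And>\<pi>. \<pi> \<in> perms N \<Longrightarrow> (\<lambda>u. h (u, \<pi>)) \<in> measurable borel L"
  shows "h \<in> measurable (key_measure N) L"
proof -
  have "fst \<in> measurable (key_measure N) (uniform_measure lborel {0..1::real})"
    unfolding key_measure_def by (rule measurable_fst)
  then have fst: "fst \<in> measurable (key_measure N) borel"
    by (simp cong: measurable_cong_sets)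
  have "snd \<in> measurable (key_measure N) (uniform_count_measure (perms N))"
    unfolding key_measure_def by (rule measurable_snd)
  moreover have "measurable (key_measure N) (uniform_count_measure (perms N))
      = measurable (key_measure N) (count_space (perms N))"
    by (rule measurable_cong_sets) (simp_all add: sets_uniform_count_measure_count_space)
  ultimately have snd: "snd \<in> measurable (key_measure N) (count_space (perms N))" by simp
  have "(\<lambda>\<kappa>. h (fst \<kappa>, snd \<kappa>)) \<in> measurable (key_measure N) L"
    by (rule measurable_compose_countable'[where f="\<lambda>\<pi> \<kappa>. h (fst \<kappa>, \<pi>)", OF _ snd])
       (use measurable_compose[OF fst assms] countable_finite[OF perms_finite] in auto)
  then show ?thesis by simp
qed

lemma nn_integral_key_measure:
  assumes h: "h \<in> borel_measurable (key_measure N)"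
  shows "(\<integral>\<^sup>+\<kappa>. h \<kappa> \<partial>key_measure N)
       = (\<Sum>\<pi>\<in>perms N. ennreal (1 / real (card (perms N))) * (\<integral>\<^sup>+u. h (u, \<pi>) * indicator {0..1} u \<partial>lborel))"
proof -
  let ?U = "uniform_measure lborel {0..1::real}"
  let ?C = "uniform_count_measure (perms N)"
  interpret C: prob_space ?C by (rule prob_space_uniform_count_measure[OF perms_finite perms_nonempty])
  interpret P: pair_sigma_finite ?U ?C
    by (intro pair_sigma_finite.intro prob_space_imp_sigma_finite prob_space_uniform_measure
        C.prob_space_axioms) auto
  have hm: "h \<in> borel_measurable (?U \<Otimes>\<^sub>M ?C)" using h unfolding key_measure_def .
  have "(\<integral>\<^sup>+\<kappa>. h \<kappa> \<partial>key_measure N) = (\<integral>\<^sup>+\<pi>. (\<integral>\<^sup>+u. h (u, \<pi>) \<partial>?U) \<partial>?C)"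
    unfolding key_measure_def using P.nn_integral_snd[OF hm] by simp
  also have "\<dots> = (\<Sum>\<pi>\<in>perms N. ennreal (1 / real (card (perms N))) * (\<integral>\<^sup>+u. h (u, \<pi>) \<partial>?U))"
    unfolding uniform_count_measure_def by (rule nn_integral_point_measure_finite[OF perms_finite])
  also have "\<dots> = (\<Sum>\<pi>\<in>perms N. ennreal (1 / real (card (perms N))) * (\<integral>\<^sup>+u. h (u, \<pi>) * indicator {0..1} u \<partial>lborel))"
  proof (intro sum.cong refl arg_cong2[where f="(*)"])
    fix \<pi> assume \<pi>: "\<pi> \<in> perms N"
    have "(\<lambda>u. h (u, \<pi>)) \<in> borel_measurable ?U"
      by (rule measurable_Pair1[OF hm]) (simp add: space_uniform_count_measure \<pi>)
    then have "(\<lambda>u. h (u, \<pi>)) \<in> borel_measurable lborel"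
      by (simp cong: measurable_cong_sets)
    then show "(\<integral>\<^sup>+u. h (u, \<pi>) \<partial>?U) = (\<integral>\<^sup>+u. h (u, \<pi>) * indicator {0..1} u \<partial>lborel)"
      by (simp add: nn_integral_uniform_measure divide_ennreal_def)
  qed
  finally show ?thesis .
qed

lemma nn_integral_key_measure_eq:
  assumes h: "h \<in> borel_measurable (key_measure N)"
    and slice: "\<And>\<pi>. \<pi> \<in> perms N \<Longrightarrow> (\<integral>\<^sup>+u. h (u, \<pi>) * indicator {0..1} u \<partial>lborel) = ennreal (x \<pi>)"
    and nonneg: "\<And>\<pi>. \<pi> \<in> perms N \<Longrightarrow> 0 \<le> x \<pi>"
  shows "(\<integral>\<^sup>+\<kappa>. h \<kappa> \<partial>key_measure N) = ennreal ((\<Sum>\<pi>\<in>perms N. x \<pi>) / real (card (perms N)))"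
proof -
  have "(\<integral>\<^sup>+\<kappa>. h \<kappa> \<partial>key_measure N) = (\<Sum>\<pi>\<in>perms N. ennreal (x \<pi> / real (card (perms N))))"
    unfolding nn_integral_key_measure[OF h]
    by (intro sum.cong refl) (simp add: slice nonneg flip: ennreal_mult)
  also have "\<dots> = ennreal (\<Sum>\<pi>\<in>perms N. x \<pi> / real (card (perms N)))"
    by (rule sum_ennreal) (simp add: nonneg)
  finally show ?thesis by (simp add: sum_divide_distrib)
qed

lemma AE_key_measure: "AE \<kappa> in key_measure N. fst \<kappa> \<in> {0..1} \<and> snd \<kappa> \<in> perms N"
proof -
  interpret C: prob_space "uniform_count_measure (perms N)"
    by (rule prob_space_uniform_count_measure[OF perms_finite perms_nonempty])
  let ?U = "uniform_measure lborel {0..1::real}"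
  have "AE u in distr (?U \<Otimes>\<^sub>M uniform_count_measure (perms N)) ?U fst. u \<in> {0..1}"
    unfolding C.distr_pair_fst by (rule AE_uniform_measureI) auto
  then have "AE \<kappa> in key_measure N. fst \<kappa> \<in> {0..1}"
    unfolding key_measure_def by (rule AE_distrD[OF measurable_fst])
  moreover have "AE \<kappa> in key_measure N. snd \<kappa> \<in> perms N"
    by (rule AE_I2) (auto simp: space_key_measure)
  ultimately show ?thesis by eventually_elim simp
qed

lemma measurable_decode_slice:
  assumes \<pi>: "\<pi> \<in> perms N"
  shows "(\<lambda>u. decode N (u, \<pi>) \<mu>) \<in> measurable borel (count_space UNIV)"
proof -
  define C where "C s = (\<Sum>j\<in>{j\<in>{1..N}. \<pi> j \<le> s}. \<mu> j)" for s
  define F where "F u = {s\<in>{1..N}. u \<le> C s}" for u :: real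
  have "F \<in> measurable borel (count_space (Pow {1..N}))"
  proof (subst measurable_count_space_eq2)
    show "F \<in> space borel \<rightarrow> Pow {1..N} \<and> (\<forall>A\<in>Pow {1..N}. F -` {A} \<inter> space borel \<in> sets borel)"
    proof (intro conjI ballI)
      fix A assume "A \<in> Pow {1..N}"
      then have "F u = A \<longleftrightarrow> (\<forall>s\<in>{1..N}. (s \<in> A) = (u \<le> C s))" for u
        unfolding F_def by blast
      then have "F -` {A} \<inter> space borel = {u. \<forall>s\<in>{1..N}. (s \<in> A) = (u \<le> C s)}"
        by auto
      also have "\<dots> \<in> sets borel" by measurable
      finally show "F -` {A} \<inter> space borel \<in> sets borel" .
    qed (auto simp: F_def)
  qed simp
  then have "(\<lambda>u. inv_into {1..N} \<pi> (Min (F u))) \<in> measurable borel (count_space UNIV)"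
    by (rule measurable_compose) simp
  then show ?thesis unfolding decode_eq_inv_into_Min[OF \<pi>] F_def C_def .
qed

lemma measurable_decode: "(\<lambda>\<kappa>. decode N \<kappa> \<mu>) \<in> measurable (key_measure N) (count_space UNIV)"
  by (rule measurable_key_measure) (rule measurable_decode_slice)

abbreviation decode_event :: "nat \<Rightarrow> (nat \<Rightarrow> real) \<Rightarrow> nat \<Rightarrow> key set" where
  "decode_event N \<mu> t \<equiv> {\<kappa> \<in> space (key_measure N). decode N \<kappa> \<mu> = t}"

lemma sets_decode_event: "decode_event N \<mu> t \<in> sets (key_measure N)"
  using measurable_sets[OF measurable_decode, of "{t}" N \<mu>] by (simp add: vimage_def Int_def conj_commute)

lemma nn_integral_decode_event_slice:
  assumes \<pi>: "\<pi> \<in> perms N" and t: "t \<in> {1..N}"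
    and nn: "\<And>j. 0 \<le> \<mu> j" and msum: "(\<Sum>j\<in>{1..N}. \<mu> j) = 1"
  shows "(\<integral>\<^sup>+u. g u * indicator (decode_event N \<mu> t) (u, \<pi>) * indicator {0..1} u \<partial>lborel)
       = (\<integral>\<^sup>+u. g u * indicator {mass_below N \<mu> \<pi> t .. mass_below N \<mu> \<pi> t + \<mu> t} u \<partial>lborel)"
proof (rule nn_integral_cong_AE)
  let ?s = "mass_below N \<mu> \<pi> t"
  show "AE u in lborel. g u * indicator (decode_event N \<mu> t) (u, \<pi>) * indicator {0..1} u
      = g u * indicator {?s .. ?s + \<mu> t} u"
    using AE_lborel_singleton[of 0] AE_lborel_singleton[of ?s]
  proof eventually_elim
    case (elim u)
    have "(u, \<pi>) \<in> decode_event N \<mu> t \<and> u \<in> {0..1} \<longleftrightarrow> u \<in> {?s .. ?s + \<mu> t}"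
    proof (cases "u \<in> {0..1}")
      case True
      then show ?thesis
        using decode_eq_iff[OF \<pi> t nn msum, of u] elim \<pi> by (auto simp: space_key_measure)
    next
      case False
      then show ?thesis using mass_below_bounds[OF \<pi> t nn msum] by auto
    qed
    then show ?case by (auto split: split_indicator)
  qed
qed

lemma emeasure_decode_event:
  assumes nn: "\<And>j. 0 \<le> \<mu> j" and msum: "(\<Sum>j\<in>{1..N}. \<mu> j) = 1"
  shows "emeasure (key_measure N) (decode_event N \<mu> t) = (if t \<in> {1..N} then ennreal (\<mu> t) else 0)"
proof (cases "t \<in> {1..N}")
  case True
  have "emeasure (key_measure N) (decode_event N \<mu> t)
      = (\<integral>\<^sup>+\<kappa>. indicator (decode_event N \<mu> t) \<kappa> \<partial>key_measure N)"
    using sets_decode_event by simp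
  also have "\<dots> = ennreal ((\<Sum>\<pi>\<in>perms N. \<mu> t) / real (card (perms N)))"
  proof (rule nn_integral_key_measure_eq)
    fix \<pi> assume \<pi>: "\<pi> \<in> perms N"
    show "(\<integral>\<^sup>+u. indicator (decode_event N \<mu> t) (u, \<pi>) * indicator {0..1} u \<partial>lborel) = ennreal (\<mu> t)"
      using nn_integral_decode_event_slice[OF \<pi> True nn msum, of "\<lambda>_. 1"] nn[of t] by simp
  qed (use sets_decode_event nn in auto)
  also have "\<dots> = ennreal (\<mu> t)" using perms_finite perms_nonempty by simp
  finally show ?thesis using True by simp
next
  case False
  have "AE \<kappa> in key_measure N. \<kappa> \<notin> decode_event N \<mu> t"
    using AE_key_measure
  proof eventually_elim
    case (elim \<kappa>)
    then have "decode N (fst \<kappa>, snd \<kappa>) \<mu> \<in> {1..N}" by (intro decode_in_vocab[OF _ _ msum]) auto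
    then show ?case using False by auto
  qed
  then show ?thesis using False by (subst (asm) AE_iff_measurable[OF sets_decode_event]) auto
qed

section \<open>Moments of the alignment score\<close>

definition score :: "nat \<Rightarrow> key \<Rightarrow> nat \<Rightarrow> real" where
  "score N \<kappa> t = (fst \<kappa> - 1/2) * (eta N (snd \<kappa> t) - 1/2)"

lemma align_cost_eq_sum_score: "align_cost N ys \<kappa> = - (\<Sum>l<length ys. score N (\<kappa> l) (ys ! l))"
  unfolding align_cost_def score_def ..

lemma measurable_score [measurable]: "(\<lambda>\<kappa>. score N \<kappa> t) \<in> borel_measurable (key_measure N)"
  by (rule measurable_key_measure) (simp add: score_def)

lemma abs_score_le:
  assumes "2 \<le> N" and "t \<in> {1..N}" and "\<pi> \<in> perms N" and "u \<in> {0..1}"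
  shows "\<bar>score N (u, \<pi>) t\<bar> \<le> 1/4"
proof -
  have "eta N (\<pi> t) \<in> {0..1}" using eta_bounds[OF assms(1) perms_in[OF assms(3,2)]] .
  then have "\<bar>u - 1/2\<bar> * \<bar>eta N (\<pi> t) - 1/2\<bar> \<le> 1/2 * (1/2)"
    using assms(4) by (intro mult_mono abs_leI) auto
  then show ?thesis by (simp add: score_def abs_mult)
qed

lemma AE_score_bounds:
  assumes "2 \<le> N" and "t \<in> {1..N}"
  shows "AE \<kappa> in key_measure N. score N \<kappa> t \<in> {-1/4..1/4}"
  using AE_key_measure
proof eventually_elim
  case (elim \<kappa>)
  then have "\<bar>score N (fst \<kappa>, snd \<kappa>) t\<bar> \<le> 1/4" using abs_score_le[OF assms] by blast
  then show ?case unfolding abs_le_iff atLeastAtMost_iff by simp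
qed

lemma affine_nonneg:
  fixes v c :: real
  assumes "v \<in> {0..1}" and "\<bar>c\<bar> \<le> 1/2"
  shows "0 \<le> (v - 1/2) * c + 1/4"
proof -
  have "\<bar>(v - 1/2) * c\<bar> \<le> 1/2 * (1/2)"
    using assms unfolding abs_mult by (intro mult_mono abs_leI) auto
  then show ?thesis by (simp only: abs_le_iff) linarith
qed

lemma nn_integral_affine_Icc:
  fixes a b c :: real
  assumes "0 \<le> a" and "a \<le> b" and "b \<le> 1" and "\<bar>c\<bar> \<le> 1/2"
  shows "(\<integral>\<^sup>+u. ennreal ((u - 1/2) * c + 1/4) * indicator {a..b} u \<partial>lborel)
       = ennreal (c * ((b - 1/2)\<^sup>2 - (a - 1/2)\<^sup>2) / 2 + (b - a) / 4)"
proof (rule nn_integral_has_integral_lebesgue')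
  show "0 \<le> (u - 1/2) * c + 1/4" if "u \<in> {a..b}" for u
    using that assms by (intro affine_nonneg) auto
  define F where "F u = c * (u - 1/2)\<^sup>2 / 2 + u / 4" for u :: real
  have "((\<lambda>u. (u - 1/2) * c + 1/4) has_integral (F b - F a)) {a..b}"
  proof (rule fundamental_theorem_of_calculus[OF \<open>a \<le> b\<close>])
    fix x :: real
    have "(F has_real_derivative ((x - 1/2) * c + 1/4)) (at x within {a..b})"
      unfolding F_def by (auto intro!: derivative_eq_intros simp: power2_eq_square field_simps)
    then show "(F has_vector_derivative ((x - 1/2) * c + 1/4)) (at x within {a..b})"
      by (simp add: has_real_derivative_iff_has_vector_derivative)
  qed
  moreover have "F b - F a = c * ((b - 1/2)\<^sup>2 - (a - 1/2)\<^sup>2) / 2 + (b - a) / 4"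
    unfolding F_def by (simp add: field_simps)
  ultimately show "((\<lambda>u. (u - 1/2) * c + 1/4)
      has_integral (c * ((b - 1/2)\<^sup>2 - (a - 1/2)\<^sup>2) / 2 + (b - a) / 4)) {a..b}"
    by simp
qed

lemma nn_integral_score_decode_event:
  assumes N: "2 \<le> N" and t: "t \<in> {1..N}"
    and nn: "\<And>j. 0 \<le> \<mu> j" and msum: "(\<Sum>j\<in>{1..N}. \<mu> j) = 1"
  shows "(\<integral>\<^sup>+\<kappa>. ennreal (score N \<kappa> t + 1/4) * indicator (decode_event N \<mu> t) \<kappa> \<partial>key_measure N)
       = ennreal (\<mu> t * (1 - \<mu> t) * C0 N + \<mu> t / 4)"
proof -
  define x where "x \<pi> = \<mu> t * ((mass_below N \<mu> \<pi> t + \<mu> t / 2 - 1/2) * (eta N (\<pi> t) - 1/2) + 1/4)" for \<pi>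
  have c: "\<bar>eta N (\<pi> t) - 1/2\<bar> \<le> 1/2" if "\<pi> \<in> perms N" for \<pi>
    using eta_bounds[OF N perms_in[OF that t]] by (intro abs_leI) auto
  have "(\<integral>\<^sup>+\<kappa>. ennreal (score N \<kappa> t + 1/4) * indicator (decode_event N \<mu> t) \<kappa> \<partial>key_measure N)
      = ennreal ((\<Sum>\<pi>\<in>perms N. x \<pi>) / real (card (perms N)))"
  proof (rule nn_integral_key_measure_eq)
    fix \<pi> assume \<pi>: "\<pi> \<in> perms N"
    let ?s = "mass_below N \<mu> \<pi> t" and ?c = "eta N (\<pi> t) - 1/2"
    have s: "0 \<le> ?s" "?s + \<mu> t \<le> 1" using mass_below_bounds[OF \<pi> t nn msum] by auto
    have "(\<integral>\<^sup>+u. ennreal (score N (u, \<pi>) t + 1/4) * indicator (decode_event N \<mu> t) (u, \<pi>)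
            * indicator {0..1} u \<partial>lborel)
        = (\<integral>\<^sup>+u. ennreal ((u - 1/2) * ?c + 1/4) * indicator {?s .. ?s + \<mu> t} u \<partial>lborel)"
      unfolding nn_integral_decode_event_slice[OF \<pi> t nn msum] by (simp add: score_def)
    also have "\<dots> = ennreal (?c * ((?s + \<mu> t - 1/2)\<^sup>2 - (?s - 1/2)\<^sup>2) / 2 + (?s + \<mu> t - ?s) / 4)"
      by (rule nn_integral_affine_Icc) (use s c[OF \<pi>] nn[of t] in auto)
    also have "?c * ((?s + \<mu> t - 1/2)\<^sup>2 - (?s - 1/2)\<^sup>2) / 2 + (?s + \<mu> t - ?s) / 4 = x \<pi>"
      unfolding x_def power2_eq_square by (simp add: field_simps)
    finally show "(\<integral>\<^sup>+u. ennreal (score N (u, \<pi>) t + 1/4) * indicator (decode_event N \<mu> t) (u, \<pi>)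
            * indicator {0..1} u \<partial>lborel) = ennreal (x \<pi>)" .
    show "0 \<le> x \<pi>"
      unfolding x_def using s nn[of t] by (intro mult_nonneg_nonneg affine_nonneg c[OF \<pi>]) auto
  qed (use sets_decode_event in measurable)
  also have "(\<Sum>\<pi>\<in>perms N. x \<pi>)
      = \<mu> t * (real (card (perms N)) * (1 - \<mu> t) * C0 N + real (card (perms N)) / 4)"
    unfolding x_def by (simp add: sum.distrib sum_perms_mass_below_eta[OF N t msum] flip: sum_distrib_left)
  also have "\<dots> / real (card (perms N)) = \<mu> t * (1 - \<mu> t) * C0 N + \<mu> t / 4"
    using perms_finite perms_nonempty by (simp add: field_simps)
  finally show ?thesis .
qed

lemma nn_integral_score:
  assumes N: "2 \<le> N" and t: "t \<in> {1..N}"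
  shows "(\<integral>\<^sup>+\<kappa>. ennreal (score N \<kappa> t + 1/4) \<partial>key_measure N) = ennreal (1/4)"
proof -
  have "(\<integral>\<^sup>+\<kappa>. ennreal (score N \<kappa> t + 1/4) \<partial>key_measure N)
      = ennreal ((\<Sum>\<pi>\<in>perms N. 1/4) / real (card (perms N)))"
  proof (rule nn_integral_key_measure_eq)
    fix \<pi> assume \<pi>: "\<pi> \<in> perms N"
    have "\<bar>eta N (\<pi> t) - 1/2\<bar> \<le> 1/2"
      using eta_bounds[OF N perms_in[OF \<pi> t]] by (intro abs_leI) auto
    then have "(\<integral>\<^sup>+u. ennreal ((u - 1/2) * (eta N (\<pi> t) - 1/2) + 1/4) * indicator {0..1} u \<partial>lborel)
        = ennreal ((eta N (\<pi> t) - 1/2) * ((1 - 1/2)\<^sup>2 - (0 - 1/2)\<^sup>2) / 2 + (1 - 0) / 4)"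
      by (intro nn_integral_affine_Icc) auto
    then show "(\<integral>\<^sup>+u. ennreal (score N (u, \<pi>) t + 1/4) * indicator {0..1} u \<partial>lborel) = ennreal (1/4)"
      by (simp add: score_def power2_eq_square)
  qed auto
  then show ?thesis using perms_finite perms_nonempty by simp
qed

lemma integrable_score:
  assumes "2 \<le> N" and "t \<in> {1..N}"
  shows "integrable (key_measure N) (\<lambda>\<kappa>. score N \<kappa> t)"
proof -
  interpret K: prob_space "key_measure N" by (rule prob_space_key_measure)
  have "AE \<kappa> in key_measure N. norm (score N \<kappa> t) \<le> 1/4"
    using AE_score_bounds[OF assms]
  proof eventually_elim
    case (elim \<kappa>)
    then show ?case unfolding real_norm_def by (intro abs_leI) auto
  qed
  then show ?thesis by (intro K.integrable_const_bound[where B="1/4"]) auto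
qed

lemma integral_score:
  assumes N: "2 \<le> N" and t: "t \<in> {1..N}"
  shows "(\<integral>\<kappa>. score N \<kappa> t \<partial>key_measure N) = 0"
proof -
  interpret K: prob_space "key_measure N" by (rule prob_space_key_measure)
  have "(\<integral>\<kappa>. score N \<kappa> t + 1/4 \<partial>key_measure N) = 1/4"
    using AE_score_bounds[OF N t]
    by (subst integral_eq_nn_integral) (auto simp: nn_integral_score[OF N t] elim: eventually_mono)
  then show ?thesis using integrable_score[OF N t] by (simp add: K.prob_space)
qed

lemma integral_score_decode_event:
  assumes N: "2 \<le> N" and t: "t \<in> {1..N}"
    and nn: "\<And>j. 0 \<le> \<mu> j" and msum: "(\<Sum>j\<in>{1..N}. \<mu> j) = 1"
  shows "(\<integral>\<kappa>. indicator (decode_event N \<mu> t) \<kappa> * score N \<kappa> t \<partial>key_measure N)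
       = \<mu> t * (1 - \<mu> t) * C0 N"
proof -
  interpret K: prob_space "key_measure N" by (rule prob_space_key_measure)
  let ?E = "decode_event N \<mu> t"
  have "\<mu> t \<le> 1" using member_le_sum[of t "{1..N}" \<mu>] nn msum t by simp
  then have "0 \<le> \<mu> t * (1 - \<mu> t) * C0 N + \<mu> t / 4" using nn[of t] C0_nonneg[OF N] by simp
  moreover have "(\<integral>\<^sup>+\<kappa>. ennreal (indicator ?E \<kappa> * (score N \<kappa> t + 1/4)) \<partial>key_measure N)
      = (\<integral>\<^sup>+\<kappa>. ennreal (score N \<kappa> t + 1/4) * indicator ?E \<kappa> \<partial>key_measure N)"
    by (intro nn_integral_cong) (simp split: split_indicator)
  ultimately have "(\<integral>\<kappa>. indicator ?E \<kappa> * (score N \<kappa> t + 1/4) \<partial>key_measure N)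
      = \<mu> t * (1 - \<mu> t) * C0 N + \<mu> t / 4"
    using AE_score_bounds[OF N t] sets_decode_event
    by (subst integral_eq_nn_integral)
       (auto simp: nn_integral_score_decode_event[OF N t nn msum] elim!: eventually_mono)
  moreover have "(\<integral>\<kappa>. indicator ?E \<kappa> * (score N \<kappa> t + 1/4) \<partial>key_measure N)
      = (\<integral>\<kappa>. indicator ?E \<kappa> * score N \<kappa> t \<partial>key_measure N) + measure (key_measure N) ?E / 4"
  proof -
    have "integrable (key_measure N) (\<lambda>\<kappa>. indicator ?E \<kappa> * score N \<kappa> t)"
      using integrable_real_mult_indicator[OF sets_decode_event integrable_score[OF N t]]
      by (simp add: mult.commute)
    moreover have "integrable (key_measure N) (\<lambda>\<kappa>. indicator ?E \<kappa> / 4 :: real)"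
      by (intro integrable_divide_zero integrable_real_indicator sets_decode_event) (simp add: K.emeasure_finite less_top[symmetric])
    moreover have "?E \<inter> space (key_measure N) = ?E" by auto
    ultimately show ?thesis by (simp add: distrib_left)
  qed
  moreover have "measure (key_measure N) ?E = \<mu> t"
    using emeasure_decode_event[OF nn msum, of t] t nn[of t] by (simp add: measure_def)
  ultimately show ?thesis by simp
qed

lemma nn_integral_exp_score_le:
  assumes N: "2 \<le> N" and t: "t \<in> {1..N}" and l: "0 \<le> l"
  shows "(\<integral>\<^sup>+\<kappa>. ennreal (exp (l * score N \<kappa> t)) \<partial>key_measure N) \<le> ennreal (exp (l\<^sup>2 / 32))"
proof -
  interpret K: prob_space "key_measure N" by (rule prob_space_key_measure)
  let ?\<Omega> = "space (key_measure N)"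
  have "(\<integral>\<^sup>+\<kappa>. ennreal (exp (l * score N \<kappa> t)) \<partial>key_measure N)
      = (\<integral>\<^sup>+\<kappa>. indicator ?\<Omega> \<kappa> * ennreal (exp (l * score N \<kappa> t)) \<partial>key_measure N)"
    by (intro nn_integral_cong) simp
  also have "\<dots> \<le> ennreal (K.prob ?\<Omega> * exp (l * (\<integral>\<kappa>. indicator ?\<Omega> \<kappa> * score N \<kappa> t \<partial>key_measure N)
      / K.prob ?\<Omega> + l\<^sup>2 * (1/4 - - 1/4)\<^sup>2 / 8))"
    by (rule K.Hoeffdings_lemma_nn_integral_indicator) (use AE_score_bounds[OF N t] l in auto)
  also have "(\<integral>\<kappa>. indicator ?\<Omega> \<kappa> * score N \<kappa> t \<partial>key_measure N) = (\<integral>\<kappa>. score N \<kappa> t \<partial>key_measure N)"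
    by (rule Bochner_Integration.integral_cong) simp_all
  also have "\<dots> = 0" by (rule integral_score[OF N t])
  finally show ?thesis by (simp add: K.prob_space power2_eq_square)
qed

lemma nn_integral_decode_event_exp_score_le:
  assumes N: "2 \<le> N" and t: "t \<in> {1..N}"
    and nn: "\<And>j. 0 \<le> \<mu> j" and msum: "(\<Sum>j\<in>{1..N}. \<mu> j) = 1" and l: "0 \<le> l"
  shows "(\<integral>\<^sup>+\<kappa>. indicator (decode_event N \<mu> t) \<kappa> * ennreal (exp (- l * score N \<kappa> t)) \<partial>key_measure N)
       \<le> ennreal (\<mu> t * exp (- l * (1 - \<mu> t) * C0 N + l\<^sup>2 / 32))"
proof -
  interpret K: prob_space "key_measure N" by (rule prob_space_key_measure)
  let ?E = "decode_event N \<mu> t"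
  have prob: "K.prob ?E = \<mu> t"
    using emeasure_decode_event[OF nn msum, of t] t nn[of t] by (simp add: measure_def)
  have "(\<integral>\<^sup>+\<kappa>. indicator ?E \<kappa> * ennreal (exp (- l * score N \<kappa> t)) \<partial>key_measure N)
      = (\<integral>\<^sup>+\<kappa>. indicator ?E \<kappa> * ennreal (exp (l * - score N \<kappa> t)) \<partial>key_measure N)"
    by simp
  also have "\<dots> \<le> ennreal (K.prob ?E * exp (l * (\<integral>\<kappa>. indicator ?E \<kappa> * - score N \<kappa> t \<partial>key_measure N)
      / K.prob ?E + l\<^sup>2 * (1/4 - - 1/4)\<^sup>2 / 8))"
    by (rule K.Hoeffdings_lemma_nn_integral_indicator)
       (use sets_decode_event AE_score_bounds[OF N t] l in \<open>auto elim!: eventually_mono\<close>)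
  also have "K.prob ?E * exp (l * (\<integral>\<kappa>. indicator ?E \<kappa> * - score N \<kappa> t \<partial>key_measure N)
      / K.prob ?E + l\<^sup>2 * (1/4 - - 1/4)\<^sup>2 / 8) = \<mu> t * exp (- l * (1 - \<mu> t) * C0 N + l\<^sup>2 / 32)"
  proof (cases "\<mu> t = 0")
    case False
    have "(\<integral>\<kappa>. indicator ?E \<kappa> * - score N \<kappa> t \<partial>key_measure N) = - (\<mu> t * ((1 - \<mu> t) * C0 N))"
      using integral_score_decode_event[OF N t nn msum] by simp
    moreover have "l * - (\<mu> t * ((1 - \<mu> t) * C0 N)) / \<mu> t = - l * (1 - \<mu> t) * C0 N"
      using False by (simp add: field_simps)
    ultimately show ?thesis unfolding prob by (simp add: power2_eq_square)
  qed (simp add: prob)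
  finally show ?thesis .
qed

section \<open>Key sequences, generation and the test statistic\<close>

lemma prob_space_keyseq_measure: "prob_space (keyseq_measure N n)"
  unfolding keyseq_measure_def by (rule prob_space_PiM) (rule prob_space_key_measure)

lemma space_keyseq_measure_nth:
  "\<xi> \<in> space (keyseq_measure N n) \<Longrightarrow> i < n \<Longrightarrow> \<xi> i \<in> space (key_measure N)"
  unfolding keyseq_measure_def by (auto simp: space_PiM)

lemma measurable_keyseq_nth [measurable (raw)]:
  assumes "f \<in> borel_measurable (key_measure N)" and "i < n"
  shows "(\<lambda>\<xi>. f (\<xi> i)) \<in> borel_measurable (keyseq_measure N n)"
  unfolding keyseq_measure_def
  by (rule measurable_compose[OF measurable_component_singleton[of i "{..<n}"] assms(1)]) (use assms(2) in simp)

lemma nn_integral_keyseq_prod: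
  assumes "inj_on \<sigma> {..<m}" and "\<And>l. l < m \<Longrightarrow> \<sigma> l < n"
    and "\<And>l. l < m \<Longrightarrow> f l \<in> borel_measurable (key_measure N)"
  shows "(\<integral>\<^sup>+\<xi>. (\<Prod>l<m. f l (\<xi> (\<sigma> l))) \<partial>keyseq_measure N n) = (\<Prod>l<m. \<integral>\<^sup>+\<kappa>. f l \<kappa> \<partial>key_measure N)"
  unfolding keyseq_measure_def
  by (rule prob_space.nn_integral_PiM_prod_inj[OF prob_space_key_measure]) (use assms in auto)

lemma measurable_align_cost_keyseq [measurable]:
  assumes "\<And>l. l < length ys \<Longrightarrow> \<sigma> l < n"
  shows "(\<lambda>\<xi>. align_cost N ys (\<lambda>l. \<xi> (\<sigma> l))) \<in> borel_measurable (keyseq_measure N n)"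
  unfolding align_cost_eq_sum_score
  by (intro borel_measurable_uminus borel_measurable_sum measurable_keyseq_nth measurable_score assms) simp

lemma inj_on_add_mod:
  fixes j m n :: nat
  assumes "m \<le> n" shows "inj_on (\<lambda>l. (j + l) mod n) {..<m}"
proof -
  have "a = b" if "b \<le> a" "a < n" "(j + a) mod n = (j + b) mod n" for a b :: nat
  proof -
    have "n dvd a - b" using that mod_eq_dvd_iff_nat[of "j + b" "j + a" n] by simp
    then show "a = b" using that dvd_imp_le[of n "a - b"] by (cases "a = b") auto
  qed
  then show ?thesis using assms unfolding inj_on_def
    by (metis lessThan_iff linorder_le_cases order_less_le_trans)
qed

lemma length_gen: "length (gen N p \<xi> k) = k"
  by (induction k) (simp_all add: Let_def)

lemma gen_eq_iff:
  "length y = k \<Longrightarrow> gen N p \<xi> k = y \<longleftrightarrow> (\<forall>i<k. decode N (\<xi> i) (p (take i y)) = y ! i)"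
proof (induction k arbitrary: y)
  case (Suc k)
  have y: "y = take k y @ [y ! k]"
    using Suc.prems by (metis lessI take_Suc_conv_app_nth take_all order_refl)
  have "gen N p \<xi> (Suc k) = take k y @ [y ! k]
      \<longleftrightarrow> gen N p \<xi> k = take k y \<and> decode N (\<xi> k) (p (take k y)) = y ! k"
    by (auto simp: Let_def)
  also have "\<dots> \<longleftrightarrow> (\<forall>i<Suc k. decode N (\<xi> i) (p (take i y)) = y ! i)"
    using Suc.IH[of "take k y"] Suc.prems by (auto simp: less_Suc_eq nth_append)
  finally show ?case using y by simp
qed simp

lemma indicator_gen_eq:
  assumes "length y = m" and "m \<le> n" and \<xi>: "\<xi> \<in> space (keyseq_measure N n)"
  shows "indicator {\<xi> \<in> space (keyseq_measure N n). gen N p \<xi> m = y} \<xi>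
       = (\<Prod>i<m. indicator (decode_event N (p (take i y)) (y ! i)) (\<xi> i) :: ennreal)"
proof (cases "gen N p \<xi> m = y")
  case True
  then have "\<xi> i \<in> decode_event N (p (take i y)) (y ! i)" if "i < m" for i
    using that assms gen_eq_iff[OF assms(1)] space_keyseq_measure_nth by auto
  then show ?thesis using True \<xi> by simp
next
  case False
  then obtain i where "i < m" "\<xi> i \<notin> decode_event N (p (take i y)) (y ! i)"
    using gen_eq_iff[OF assms(1)] by auto
  then have "(\<Prod>i<m. indicator (decode_event N (p (take i y)) (y ! i)) (\<xi> i) :: ennreal) = 0"
    by (intro prod_zero bexI[of _ i]) auto
  then show ?thesis using False by simp
qed

lemma emeasure_gen_eq:
  assumes "length y = m" and "m \<le> n"
  shows "{\<xi> \<in> space (keyseq_measure N n). gen N p \<xi> m = y} \<in> sets (keyseq_measure N n)" (is "?B \<in> _")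
    and "emeasure (keyseq_measure N n) {\<xi> \<in> space (keyseq_measure N n). gen N p \<xi> m = y}
       = (\<Prod>i<m. emeasure (key_measure N) (decode_event N (p (take i y)) (y ! i)))"
proof -
  let ?F = "\<lambda>\<xi>. \<Prod>i<m. indicator (decode_event N (p (take i y)) (y ! i)) (\<xi> i) :: ennreal"
  have F: "?F \<in> borel_measurable (keyseq_measure N n)"
    using assms(2) sets_decode_event by (intro borel_measurable_prod_ennreal measurable_keyseq_nth) auto
  have "(\<lambda>\<xi>. indicator ?B \<xi> :: ennreal) \<in> borel_measurable (keyseq_measure N n)"
    using F by (subst measurable_cong[OF indicator_gen_eq[OF assms]])
  then show B: "?B \<in> sets (keyseq_measure N n)"
    by (subst (asm) borel_measurable_indicator_iff) (simp add: Int_absorb2)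
  have "emeasure (keyseq_measure N n) ?B = (\<integral>\<^sup>+\<xi>. ?F \<xi> \<partial>keyseq_measure N n)"
    using B by (simp add: nn_integral_indicator[symmetric] indicator_gen_eq[OF assms] cong: nn_integral_cong)
  also have "\<dots> = (\<Prod>i<m. emeasure (key_measure N) (decode_event N (p (take i y)) (y ! i)))"
    using assms(2) sets_decode_event by (subst nn_integral_keyseq_prod[of "\<lambda>i. i"]) auto
  finally show "emeasure (keyseq_measure N n) ?B
      = (\<Prod>i<m. emeasure (key_measure N) (decode_event N (p (take i y)) (y ! i)))" .
qed

lemma prob_gen_eq:
  assumes p_nonneg: "\<And>xs i. 0 \<le> p xs i" and p_sum: "\<And>xs. (\<Sum>i\<in>{1..N}. p xs i) = 1"
    and "length y = m" and "m \<le> n"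
  shows "\<P>(\<omega> in keyseq_measure N n \<Otimes>\<^sub>M keyseq_measure N n. gen N p (fst \<omega>) m = y)
       = (\<Prod>i<m. if y ! i \<in> {1..N} then p (take i y) (y ! i) else 0)"
proof -
  interpret KS: prob_space "keyseq_measure N n" by (rule prob_space_keyseq_measure)
  have "\<P>(\<omega> in keyseq_measure N n \<Otimes>\<^sub>M keyseq_measure N n. gen N p (fst \<omega>) m = y)
      = measure (keyseq_measure N n) {\<xi> \<in> space (keyseq_measure N n). gen N p \<xi> m = y}"
    by (rule KS.measure_pair_measure_fst[OF emeasure_gen_eq(1)[OF assms(3,4)]])
  also have "\<dots> = enn2real (\<Prod>i<m. emeasure (key_measure N) (decode_event N (p (take i y)) (y ! i)))"
    by (simp add: measure_def emeasure_gen_eq(2)[OF assms(3,4)])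
  also have "(\<Prod>i<m. emeasure (key_measure N) (decode_event N (p (take i y)) (y ! i)))
      = (\<Prod>i<m. ennreal (if y ! i \<in> {1..N} then p (take i y) (y ! i) else 0))"
    by (intro prod.cong refl) (simp add: emeasure_decode_event[OF p_nonneg p_sum])
  also have "\<dots> = ennreal (\<Prod>i<m. if y ! i \<in> {1..N} then p (take i y) (y ! i) else 0)"
    by (rule prod_ennreal) (simp add: p_nonneg)
  finally show ?thesis by (simp add: prod_nonneg p_nonneg)
qed

lemma prob_gen_eq_pos_imp:
  assumes p_nonneg: "\<And>xs i. 0 \<le> p xs i" and p_sum: "\<And>xs. (\<Sum>i\<in>{1..N}. p xs i) = 1"
    and "m \<le> n"
    and pos: "\<P>(\<omega> in keyseq_measure N n \<Otimes>\<^sub>M keyseq_measure N n. gen N p (fst \<omega>) m = y) > 0"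
  shows "length y = m" and "set y \<subseteq> {1..N}"
    and "\<P>(\<omega> in keyseq_measure N n \<Otimes>\<^sub>M keyseq_measure N n. gen N p (fst \<omega>) m = y)
       = (\<Prod>i<m. p (take i y) (y ! i))"
proof -
  show y: "length y = m"
    using pos length_gen[of N p _ m] by (metis (mono_tags, lifting) Collect_empty_eq less_irrefl measure_empty)
  note prob_y = prob_gen_eq[where p=p, OF p_nonneg p_sum y \<open>m \<le> n\<close>]
  show vocab: "set y \<subseteq> {1..N}"
  proof
    fix t assume "t \<in> set y"
    then obtain i where i: "i < m" "y ! i = t" using y by (auto simp: in_set_conv_nth)
    show "t \<in> {1..N}"
    proof (rule ccontr)
      assume "t \<notin> {1..N}"
      then have "(\<Prod>i<m. if y ! i \<in> {1..N} then p (take i y) (y ! i) else 0) = 0"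
        using i by (intro prod_zero bexI[of _ i]) auto
      then show False using pos prob_y by linarith
    qed
  qed
  show "\<P>(\<omega> in keyseq_measure N n \<Otimes>\<^sub>M keyseq_measure N n. gen N p (fst \<omega>) m = y)
      = (\<Prod>i<m. p (take i y) (y ! i))"
    unfolding prob_y using vocab y by (intro prod.cong) (auto simp: subset_iff)
qed

lemma test_stat_eq_Min_shifts:
  assumes "length ys = k" and "1 \<le> n"
  shows "test_stat N n k ys \<xi> = Min ((\<lambda>j. align_cost N ys (\<lambda>l. \<xi> ((j + l) mod n))) ` {..<n})"
proof -
  have "{align_cost N (take k (drop i ys)) (\<lambda>l. \<xi> ((j + l) mod n)) | i j. i \<le> length ys - k \<and> j < n}
      = (\<lambda>j. align_cost N ys (\<lambda>l. \<xi> ((j + l) mod n))) ` {..<n}"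
    using assms by auto
  then show ?thesis unfolding test_stat_def by simp
qed

lemma test_stat_le_imp_shift_le:
  assumes ys: "length ys = k" "k \<le> n" "1 \<le> n"
    and le: "test_stat N n k ys \<xi>' \<le> test_stat N n k ys \<xi>"
  shows "\<exists>j<n. align_cost N ys (\<lambda>l. \<xi>' ((j + l) mod n)) \<le> align_cost N ys \<xi>"
proof -
  let ?cost = "\<lambda>\<xi> j. align_cost N ys (\<lambda>l. \<xi> ((j + l) mod n))"
  have "{..<n} \<noteq> {}" using ys(3) by (simp add: lessThan_empty_iff)
  then have "test_stat N n k ys \<xi>' \<in> ?cost \<xi>' ` {..<n}"
    unfolding test_stat_eq_Min_shifts[OF ys(1,3)] by (intro Min_in) auto
  then obtain j where j: "j < n" "test_stat N n k ys \<xi>' = ?cost \<xi>' j" by auto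
  have "?cost \<xi> 0 \<in> ?cost \<xi> ` {..<n}" by (rule imageI) (use ys(3) in simp)
  then have "test_stat N n k ys \<xi> \<le> ?cost \<xi> 0"
    unfolding test_stat_eq_Min_shifts[OF ys(1,3)] by (intro Min_le) auto
  also have "?cost \<xi> 0 = align_cost N ys \<xi>"
    unfolding align_cost_def using ys by (intro arg_cong[where f=uminus] sum.cong) auto
  finally show ?thesis using j le by auto
qed

section \<open>The detection bound\<close>

lemma nn_integral_gen_eq_exp_align_cost_le:
  assumes N: "2 \<le> N" and p_nonneg: "\<And>xs i. 0 \<le> p xs i" and p_sum: "\<And>xs. (\<Sum>i\<in>{1..N}. p xs i) = 1"
    and y: "length y = m" "m \<le> n" "set y \<subseteq> {1..N}" and l: "0 \<le> l"
  shows "(\<integral>\<^sup>+\<xi>. indicator {\<xi> \<in> space (keyseq_measure N n). gen N p \<xi> m = y} \<xi>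
              * ennreal (exp (l * align_cost N y \<xi>)) \<partial>keyseq_measure N n)
       \<le> ennreal (\<Prod>i<m. p (take i y) (y ! i) * exp (- l * (1 - p (take i y) (y ! i)) * C0 N + l\<^sup>2 / 32))"
proof -
  let ?f = "\<lambda>i \<kappa>. indicator (decode_event N (p (take i y)) (y ! i)) \<kappa> * ennreal (exp (- l * score N \<kappa> (y ! i)))"
  have "(\<integral>\<^sup>+\<xi>. indicator {\<xi> \<in> space (keyseq_measure N n). gen N p \<xi> m = y} \<xi>
              * ennreal (exp (l * align_cost N y \<xi>)) \<partial>keyseq_measure N n)
      = (\<integral>\<^sup>+\<xi>. (\<Prod>i<m. ?f i (\<xi> i)) \<partial>keyseq_measure N n)"
  proof (rule nn_integral_cong)
    fix \<xi> assume \<xi>: "\<xi> \<in> space (keyseq_measure N n)"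
    have "l * align_cost N y \<xi> = (\<Sum>i<m. - l * score N (\<xi> i) (y ! i))"
      by (simp add: align_cost_eq_sum_score y(1) sum_distrib_left sum_negf)
    then show "indicator {\<xi> \<in> space (keyseq_measure N n). gen N p \<xi> m = y} \<xi>
              * ennreal (exp (l * align_cost N y \<xi>)) = (\<Prod>i<m. ?f i (\<xi> i))"
      by (simp add: indicator_gen_eq[OF y(1,2) \<xi>] ennreal_exp_sum prod.distrib)
  qed
  also have "\<dots> = (\<Prod>i<m. \<integral>\<^sup>+\<kappa>. ?f i \<kappa> \<partial>key_measure N)"
    using y(2) sets_decode_event by (intro nn_integral_keyseq_prod[of "\<lambda>i. i", simplified]) auto
  also have "\<dots> \<le> (\<Prod>i<m. ennreal (p (take i y) (y ! i) * exp (- l * (1 - p (take i y) (y ! i)) * C0 N + l\<^sup>2 / 32)))"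
    using y by (intro prod_mono_ennreal nn_integral_decode_event_exp_score_le[OF N _ p_nonneg p_sum l])
       (auto simp: subset_iff)
  also have "\<dots> = ennreal (\<Prod>i<m. p (take i y) (y ! i) * exp (- l * (1 - p (take i y) (y ! i)) * C0 N + l\<^sup>2 / 32))"
    by (rule prod_ennreal) (simp add: p_nonneg)
  finally show ?thesis .
qed

lemma nn_integral_exp_shifted_align_cost_le:
  assumes N: "2 \<le> N" and y: "length y = m" "m \<le> n" "set y \<subseteq> {1..N}" and l: "0 \<le> l"
  shows "(\<integral>\<^sup>+\<xi>. ennreal (exp (- l * align_cost N y (\<lambda>i. \<xi> ((j + i) mod n)))) \<partial>keyseq_measure N n)
       \<le> ennreal (exp (real m * l\<^sup>2 / 32))"
proof -
  have "(\<integral>\<^sup>+\<xi>. ennreal (exp (- l * align_cost N y (\<lambda>i. \<xi> ((j + i) mod n)))) \<partial>keyseq_measure N n)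
      = (\<integral>\<^sup>+\<xi>. (\<Prod>i<m. ennreal (exp (l * score N (\<xi> ((j + i) mod n)) (y ! i)))) \<partial>keyseq_measure N n)"
    by (simp add: align_cost_eq_sum_score y(1) sum_distrib_left sum_negf ennreal_exp_sum)
  also have "\<dots> = (\<Prod>i<m. \<integral>\<^sup>+\<kappa>. ennreal (exp (l * score N \<kappa> (y ! i))) \<partial>key_measure N)"
    using y(2) by (intro nn_integral_keyseq_prod inj_on_add_mod) auto
  also have "\<dots> \<le> (\<Prod>i<m. ennreal (exp (l\<^sup>2 / 32)))"
    using y by (intro prod_mono_ennreal nn_integral_exp_score_le[OF N _ l]) (auto simp: subset_iff)
  also have "\<dots> = ennreal (exp (real m * l\<^sup>2 / 32))"
    using ennreal_exp_sum[of "{..<m}" "\<lambda>_. l\<^sup>2 / 32"] by simp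
  finally show ?thesis .
qed

lemma test_stat_le_imp_sum_exp_ge:
  assumes "length ys = k" and "k \<le> n" and "0 < n" and l: "0 \<le> l"
    and "test_stat N n k ys \<xi>' \<le> test_stat N n k ys \<xi>"
  shows "1 \<le> (\<Sum>j<n. ennreal (exp (l * align_cost N ys \<xi>))
                    * ennreal (exp (- l * align_cost N ys (\<lambda>i. \<xi>' ((j + i) mod n)))))"
proof -
  obtain j where j: "j < n" "align_cost N ys (\<lambda>i. \<xi>' ((j + i) mod n)) \<le> align_cost N ys \<xi>"
    using test_stat_le_imp_shift_le[of ys k n N \<xi>' \<xi>] assms by auto
  then have "0 \<le> l * align_cost N ys \<xi> + - l * align_cost N ys (\<lambda>i. \<xi>' ((j + i) mod n))"
    using l by (simp flip: right_diff_distrib)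
  then have "ennreal 1 \<le> ennreal (exp (l * align_cost N ys \<xi>) * exp (- l * align_cost N ys (\<lambda>i. \<xi>' ((j + i) mod n))))"
    by (intro ennreal_leI) (simp flip: exp_add)
  also have "\<dots> = ennreal (exp (l * align_cost N ys \<xi>))
      * ennreal (exp (- l * align_cost N ys (\<lambda>i. \<xi>' ((j + i) mod n))))"
    by (simp add: ennreal_mult)
  also have "\<dots> \<le> (\<Sum>j<n. ennreal (exp (l * align_cost N ys \<xi>))
                    * ennreal (exp (- l * align_cost N ys (\<lambda>i. \<xi>' ((j + i) mod n)))))"
    by (rule member_le_sum) (use j in auto)
  finally show ?thesis by simp
qed

lemma prob_test_stat_le_gen_eq_le:
  assumes N: "2 \<le> N" and m: "1 \<le> m" "m \<le> n"
    and p_nonneg: "\<And>xs i. 0 \<le> p xs i" and p_sum: "\<And>xs. (\<Sum>i\<in>{1..N}. p xs i) = 1"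
    and y: "length y = m" "set y \<subseteq> {1..N}" and l: "0 \<le> l"
  shows "\<P>(\<omega> in keyseq_measure N n \<Otimes>\<^sub>M keyseq_measure N n.
            test_stat N n m (gen N p (fst \<omega>) m) (snd \<omega>) \<le> test_stat N n m (gen N p (fst \<omega>) m) (fst \<omega>)
            \<and> gen N p (fst \<omega>) m = y)
       \<le> real n * (\<Prod>i<m. p (take i y) (y ! i) * exp (- l * (1 - p (take i y) (y ! i)) * C0 N + l\<^sup>2 / 32))
           * exp (real m * l\<^sup>2 / 32)"
    (is "measure ?\<Omega> ?A \<le> real n * ?P * ?Q")
proof -
  let ?KS = "keyseq_measure N n"
  let ?B = "{\<xi> \<in> space ?KS. gen N p \<xi> m = y}"
  define F where "F \<xi> = indicator ?B \<xi> * ennreal (exp (l * align_cost N y \<xi>))" for \<xi>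
  define G where "G j \<xi> = ennreal (exp (- l * align_cost N y (\<lambda>i. \<xi> ((j + i) mod n))))" for j \<xi>
  interpret KS: prob_space ?KS by (rule prob_space_keyseq_measure)
  have n: "0 < n" using m by simp
  have "(\<lambda>\<xi>. align_cost N y \<xi>) \<in> borel_measurable ?KS"
    by (rule measurable_align_cost_keyseq[of y "\<lambda>i. i", simplified]) (use y m in auto)
  then have F_meas: "F \<in> borel_measurable ?KS"
    using emeasure_gen_eq(1)[OF y(1) m(2)] unfolding F_def by measurable
  have G_meas: "G j \<in> borel_measurable ?KS" for j
    unfolding G_def by measurable (simp add: n)
  have P: "0 \<le> ?P" by (intro prod_nonneg) (simp add: p_nonneg)
  have le_sum: "indicator ?A \<omega> \<le> (\<Sum>j<n. F (fst \<omega>) * G j (snd \<omega>))" if "\<omega> \<in> space ?\<Omega>" for \<omega>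
  proof (cases "\<omega> \<in> ?A")
    case True
    then have "fst \<omega> \<in> ?B" and "test_stat N n m y (snd \<omega>) \<le> test_stat N n m y (fst \<omega>)"
      using that by (auto simp: space_pair_measure)
    then show ?thesis
      using test_stat_le_imp_sum_exp_ge[OF y(1) m(2) _ l] n
      unfolding indicator_simps(1)[OF True] F_def G_def by simp
  qed simp
  show ?thesis
  proof (cases "?A \<in> sets ?\<Omega>")
    case False
    then show ?thesis using P by (simp add: measure_notin_sets)
  next
    case True
    have "emeasure ?\<Omega> ?A \<le> (\<Sum>j<n. (\<integral>\<^sup>+\<xi>. F \<xi> \<partial>?KS) * (\<integral>\<^sup>+\<xi>. G j \<xi> \<partial>?KS))"
      by (rule emeasure_pair_measure_le_sum_mult[OF KS.sigma_finite_measure_axioms F_meas G_meas True le_sum])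
    also have "\<dots> \<le> (\<Sum>j<n. ennreal ?P * ennreal ?Q)"
      unfolding F_def G_def
      by (intro sum_mono mult_mono nn_integral_gen_eq_exp_align_cost_le[OF N p_nonneg p_sum y(1) m(2) y(2) l]
          nn_integral_exp_shifted_align_cost_le[OF N y(1) m(2) y(2) l]) auto
    also have "\<dots> = ennreal (real n * ?P * ?Q)"
      using P by (simp add: ennreal_mult ennreal_of_nat_eq_real_of_nat mult.assoc)
    finally show ?thesis using P by (simp add: measure_def enn2real_leI)
  qed
qed

lemma sum_one_minus_eq_wm_potential:
  assumes "length y = m" and "1 \<le> m"
  shows "(\<Sum>i<m. 1 - p (take i y) (y ! i)) = real m * wm_potential p y"
  using assms unfolding wm_potential_def by (simp add: sum_subtractf field_simps)

lemma prob_test_stat_le_gen_eq_le_potential: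
  assumes N: "2 \<le> N" and m: "1 \<le> m" "m \<le> n"
    and p_nonneg: "\<And>xs i. 0 \<le> p xs i" and p_sum: "\<And>xs. (\<Sum>i\<in>{1..N}. p xs i) = 1"
    and y: "length y = m" "set y \<subseteq> {1..N}"
  shows "\<P>(\<omega> in keyseq_measure N n \<Otimes>\<^sub>M keyseq_measure N n.
            test_stat N n m (gen N p (fst \<omega>) m) (snd \<omega>) \<le> test_stat N n m (gen N p (fst \<omega>) m) (fst \<omega>)
            \<and> gen N p (fst \<omega>) m = y)
       \<le> real n * (\<Prod>i<m. p (take i y) (y ! i)) * exp (- 4 * real m * (wm_potential p y)\<^sup>2 * (C0 N)\<^sup>2)"
proof -
  define q where "q i = p (take i y) (y ! i)" for i
  define \<alpha> where "\<alpha> = wm_potential p y"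
  define l where "l = 8 * \<alpha> * C0 N"
  have "q i \<le> 1" if "i < m" for i
    using p_nonneg member_le_sum[of "y ! i" "{1..N}" "p (take i y)"] p_sum y that
    by (auto simp: q_def subset_iff)
  moreover have \<alpha>: "(\<Sum>i<m. 1 - q i) = real m * \<alpha>"
    unfolding q_def \<alpha>_def by (rule sum_one_minus_eq_wm_potential[OF y(1) m(1)])
  ultimately have "0 \<le> real m * \<alpha>" by (metis lessThan_iff sum_nonneg diff_ge_0_iff_ge)
  then have l: "0 \<le> l" using m C0_nonneg[OF N] by (simp add: l_def zero_le_mult_iff)
  have "(\<Sum>i<m. - l * (1 - q i) * C0 N) = - l * C0 N * (\<Sum>i<m. 1 - q i)"
    by (simp add: sum_distrib_left mult_ac)
  then have "(\<Sum>i<m. - l * (1 - q i) * C0 N + l\<^sup>2 / 32) + real m * l\<^sup>2 / 32 = - 4 * real m * \<alpha>\<^sup>2 * (C0 N)\<^sup>2"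
    unfolding sum.distrib \<alpha> by (simp add: l_def power2_eq_square field_simps)
  then have "real n * (\<Prod>i<m. q i * exp (- l * (1 - q i) * C0 N + l\<^sup>2 / 32)) * exp (real m * l\<^sup>2 / 32)
      = real n * (\<Prod>i<m. q i) * exp (- 4 * real m * \<alpha>\<^sup>2 * (C0 N)\<^sup>2)"
    by (simp add: prod.distrib mult.assoc flip: exp_add exp_sum)
  with prob_test_stat_le_gen_eq_le[where p=p, OF N m p_nonneg p_sum y l] show ?thesis
    unfolding q_def \<alpha>_def by (rule ord_le_eq_trans)
qed

theorem lemma4:
  fixes N m n :: nat and p :: "nat list \<Rightarrow> nat \<Rightarrow> real" and y :: "nat list"
  assumes N: "2 \<le> N"
    and m: "1 \<le> m" and nm: "m \<le> n"
    and p_nonneg: "\<And>xs i. 0 \<le> p xs i"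
    and p_sum: "\<And>xs. (\<Sum>i\<in>{1..N}. p xs i) = 1"
    and pos: "\<P>(\<omega> in keyseq_measure N n \<Otimes>\<^sub>M keyseq_measure N n.
                 gen N p (fst \<omega>) m = y) > 0"
  shows "\<P>(\<omega> in keyseq_measure N n \<Otimes>\<^sub>M keyseq_measure N n.
            test_stat N n m (gen N p (fst \<omega>) m) (snd \<omega>)
              \<le> test_stat N n m (gen N p (fst \<omega>) m) (fst \<omega>)
          \<bar> gen N p (fst \<omega>) m = y)
         \<le> 2 * real n * exp (- real m * (C0 N)\<^sup>2 * (wm_potential p y)\<^sup>2 / 2)"
proof -
  let ?P = "\<Prod>i<m. p (take i y) (y ! i)" and ?\<alpha> = "wm_potential p y"
  note y = prob_gen_eq_pos_imp[where p=p, OF p_nonneg p_sum nm pos]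
  have "exp (- 4 * real m * ?\<alpha>\<^sup>2 * (C0 N)\<^sup>2) \<le> 2 * exp (- real m * (C0 N)\<^sup>2 * ?\<alpha>\<^sup>2 / 2)"
    by (rule order_trans[of _ "exp (- real m * (C0 N)\<^sup>2 * ?\<alpha>\<^sup>2 / 2)"]) (auto simp: mult_nonneg_nonneg)
  then have "real n * exp (- 4 * real m * ?\<alpha>\<^sup>2 * (C0 N)\<^sup>2) \<le> real n * (2 * exp (- real m * (C0 N)\<^sup>2 * ?\<alpha>\<^sup>2 / 2))"
    by (rule mult_left_mono) simp
  then have "?P * (real n * exp (- 4 * real m * ?\<alpha>\<^sup>2 * (C0 N)\<^sup>2))
      \<le> ?P * (2 * real n * exp (- real m * (C0 N)\<^sup>2 * ?\<alpha>\<^sup>2 / 2))"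
    using pos unfolding y(3) by (intro mult_left_mono) (simp_all add: mult_ac)
  with prob_test_stat_le_gen_eq_le_potential[where p=p, OF N m nm p_nonneg p_sum y(1,2)] show ?thesis
    using pos unfolding cond_prob_def y(3) by (simp add: pos_divide_le_eq mult_ac)
qed

end
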